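(* There are constants $a,b>0$, depending only on $\zeta_l,\zeta_r$ (independent of $E\in\mathbb{R}$, of $N\ge2$ and of $v$), such that $a\|T_N(E)\|\le\|\tilde T_N(E)\|\le b\|T_N(E)\|$ for all $E\in\mathbb{R}$. Consequently, under $\beta=0$, $\zeta_l,\zeta_r>0$, there are constants $c_1,c_2>0$ independent of $N$ with $c_1\int_{\mathbb{R}}\frac{dE}{\|T_N(E)\|^2}\le -\langle e_1,l^{-1}(p_N)e_1\rangle\le c_2\int_{\mathbb{R}}\frac{dE}{\|T_N(E)\|^2}$.
   Context: Let $v:\mathbb{N}\to\mathbb{R}$ be bounded and $N\ge2$. For a sequence $u$, $T^u_N(E)=A^u_N(E)\cdots A^u_1(E)$ with $A^u_n(E)=\begin{pmatrix}u(n)-E&-1\\1&0\end{pmatrix}$; $T_N(E)=T^v_N(E)$. For $\zeta_l,\zeta_r\ge0$, let $\tilde v(1)=v(1)-i\zeta_l$, $\tilde v(N)=v(N)-i\zeta_r$, $\tilde v(n)=v(n)$ otherwise, and $\tilde T_N(E)=T^{\tilde v}_N(E)$. $\|\cdot\|$ is the operator norm. Let $e_1,\dots,e_N$ be the standard basis of $\mathbb{C}^N$, $p_n=|e_n\rangle\langle e_n|$, $h$ the Hermitian matrix $(h\psi)(n)=-\psi(n+1)-\psi(n-1)+v(n)\psi(n)$ with $\psi(0)=\psi(N+1)=0$, and, for $\beta=0$, $l(a)=-i[h,a]-\{\zeta_lp_1+\zeta_rp_N,a\}$ on $M_N(\mathbb{C})$. *)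

theory Defs imports "HOL-Analysis.Analysis" "Jordan_Normal_Form.Matrix" begin

definition mat2 :: "complex \<Rightarrow> complex \<Rightarrow> complex \<Rightarrow> complex \<Rightarrow> complex^2^2" where
  "mat2 a b c d = (\<chi> i j. if i = 1 then (if j = 1 then a else b) else (if j = 1 then c else d))"

definition Astep :: "(nat \<Rightarrow> complex) \<Rightarrow> nat \<Rightarrow> real \<Rightarrow> complex^2^2" where
  "Astep u n E = mat2 (u n - of_real E) (-1) 1 0"

fun Ttrans :: "(nat \<Rightarrow> complex) \<Rightarrow> nat \<Rightarrow> real \<Rightarrow> complex^2^2" where
  "Ttrans u 0 E = Finite_Cartesian_Product.mat 1"
| "Ttrans u (Suc n) E = Astep u (Suc n) E ** Ttrans u n E"

definition opnorm :: "complex^2^2 \<Rightarrow> real" where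
  "opnorm A = onorm (\<lambda>x. A *v x)"

definition vtilde :: "(nat \<Rightarrow> real) \<Rightarrow> nat \<Rightarrow> real \<Rightarrow> real \<Rightarrow> nat \<Rightarrow> complex" where
  "vtilde v N zl zr n =
     (if n = 1 then of_real (v 1) - \<i> * of_real zl
      else if n = N then of_real (v N) - \<i> * of_real zr
      else of_real (v n))"

section \<open>N x N objects (site n in {1..N} corresponds to matrix index n - 1)\<close>

definition hmat :: "nat \<Rightarrow> (nat \<Rightarrow> real) \<Rightarrow> complex Matrix.mat" where
  "hmat N v = Matrix.mat N N (\<lambda>(i, j).
      if i = j then of_real (v (i + 1))
      else if i = j + 1 \<or> j = i + 1 then -1 else 0)"

definition proj :: "nat \<Rightarrow> nat \<Rightarrow> complex Matrix.mat" where
  "proj N n = Matrix.mat N N (\<lambda>(i, j). if i = n - 1 \<and> j = n - 1 then 1 else 0)"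

definition lop :: "nat \<Rightarrow> (nat \<Rightarrow> real) \<Rightarrow> real \<Rightarrow> real \<Rightarrow> complex Matrix.mat \<Rightarrow> complex Matrix.mat" where
  "lop N v zl zr a =
     (let h = hmat N v;
          P = of_real zl \<cdot>\<^sub>m proj N 1 + of_real zr \<cdot>\<^sub>m proj N N
      in (- \<i>) \<cdot>\<^sub>m (h * a - a * h) - (P * a + a * P))"

definition lop_inv :: "nat \<Rightarrow> (nat \<Rightarrow> real) \<Rightarrow> real \<Rightarrow> real \<Rightarrow> complex Matrix.mat \<Rightarrow> complex Matrix.mat" where
  "lop_inv N v zl zr b = (THE x. x \<in> carrier_mat N N \<and> lop N v zl zr x = b)"

end

theory Submission
  imports Defs "HOL-Complex_Analysis.Cauchy_Integral_Theorem" "HOL-Probability.Sinc_Integral"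
begin

no_notation Matrix.vec_index (infixl "$" 100)

text \<open>The imaginary boundary terms only change the first and the last transfer step:
  T~_N = S_r T_N S_l with the unipotent shears S_l = [[1, 0], [i zl, 1]] and
  S_r = [[1, -i zr], [0, 1]], whose inverses are again shears.  This gives the first claim with
  b = (2 + zl)(2 + zr) and a = 1/b.

  For the second claim let psi(E) = (h - i Gamma - E)^(-1) e_N with Gamma = zl p_1 + zr p_N.  Its
  entries are ratios of Dirichlet solutions of the complexified chain, hence rational in E,
  holomorphic in the closed upper half plane (conservation of the current) and O(1/E) at infinity,
  and psi_1 = 1 / (T~_N)_11.  Pointwise in E, l(psi psi^* ) = i (psi e_N^* - e_N psi^* ), and
  closing the contour in the upper half plane gives PV Int psi dE = i pi e_N, so
  x = -(1/2 pi) Int psi psi^* dE solves l(x) = p_N.  The operator l is injective because the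
  damping at site 1 dissipates Re tr(x^* l(x)).  Hence
  -<e_1, l^(-1)(p_N) e_1> = (1/2 pi) Int |(T~_N)_11|^(-2) dE, and since T_N is real with
  determinant 1, |(T~_N)_11|^2 = t11^2 + zl^2 zr^2 t22^2 + zl^2 t12^2 + zr^2 t21^2 + 2 zl zr
  is comparable to the squared norm of T_N.\<close>

section \<open>Two by two matrices\<close>

lemma mat2_component [simp]:
  "mat2 a b c d $ 1 $ 1 = a" "mat2 a b c d $ 1 $ 2 = b"
  "mat2 a b c d $ 2 $ 1 = c" "mat2 a b c d $ 2 $ 2 = d"
  by (simp_all add: mat2_def)

lemma mat2_mult:
  "mat2 a b c d ** mat2 a' b' c' d' =
     mat2 (a * a' + b * c') (a * b' + b * d') (c * a' + d * c') (c * b' + d * d')"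
  unfolding Finite_Cartesian_Product.vec_eq_iff matrix_matrix_mult_def
  by (auto simp: forall_2 sum_2)

lemma mat2_one: "(Finite_Cartesian_Product.mat 1 :: complex^2^2) = mat2 1 0 0 1"
  unfolding Finite_Cartesian_Product.vec_eq_iff
  by (auto simp: forall_2 Finite_Cartesian_Product.mat_def)

definition lower_shear :: "complex \<Rightarrow> complex^2^2" where
  "lower_shear c = mat2 1 0 c 1"

definition upper_shear :: "complex \<Rightarrow> complex^2^2" where
  "upper_shear c = mat2 1 c 0 1"

lemma det_mat2: "det (mat2 a b c d) = a * d - b * c"
  by (simp add: det_2)

lemma lower_shear_mult: "lower_shear a ** lower_shear b = lower_shear (a + b)"
  by (simp add: lower_shear_def mat2_mult)

lemma upper_shear_mult: "upper_shear a ** upper_shear b = upper_shear (a + b)"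
  by (simp add: upper_shear_def mat2_mult add.commute)

lemma lower_shear_0: "lower_shear 0 = Finite_Cartesian_Product.mat 1"
  by (simp add: lower_shear_def mat2_one)

lemma upper_shear_0: "upper_shear 0 = Finite_Cartesian_Product.mat 1"
  by (simp add: upper_shear_def mat2_one)

lemma opnorm_nonneg: "0 \<le> opnorm A"
  unfolding opnorm_def by (rule onorm_pos_le[OF matrix_vector_mul_bounded_linear])

lemma opnorm_matrix_mult_le: "opnorm (A ** B) \<le> opnorm A * opnorm B"
proof -
  have "(*v) (A ** B) = (*v) A \<circ> (*v) B" by (auto simp: matrix_vector_mul_assoc)
  then show ?thesis
    unfolding opnorm_def by (metis onorm_compose matrix_vector_mul_bounded_linear)
qed

lemma opnorm_sandwich_le: "opnorm (A ** B ** C) \<le> opnorm A * opnorm B * opnorm C"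
proof -
  have "opnorm (A ** B ** C) \<le> opnorm (A ** B) * opnorm C" by (rule opnorm_matrix_mult_le)
  also have "\<dots> \<le> opnorm A * opnorm B * opnorm C"
    by (intro mult_right_mono opnorm_matrix_mult_le opnorm_nonneg)
  finally show ?thesis .
qed

lemma opnorm_le_sum_components:
  fixes A :: "complex^2^2"
  shows "opnorm A \<le> cmod (A$1$1) + cmod (A$1$2) + cmod (A$2$1) + cmod (A$2$2)"
  unfolding opnorm_def
proof (rule onorm_le)
  fix x :: "complex^2"
  have x: "cmod (x$1) \<le> norm x" "cmod (x$2) \<le> norm x"
    by (rule Finite_Cartesian_Product.norm_nth_le)+
  have "norm (A *v x) \<le> cmod ((A *v x) $ 1) + cmod ((A *v x) $ 2)"
    unfolding norm_vec_def by (rule order_trans[OF L2_set_le_sum]) (auto simp: sum_2)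
  also have "\<dots> = cmod (A$1$1 * x$1 + A$1$2 * x$2) + cmod (A$2$1 * x$1 + A$2$2 * x$2)"
    by (simp add: matrix_vector_mult_def sum_2)
  also have "\<dots> \<le> cmod (A$1$1) * norm x + cmod (A$1$2) * norm x
                 + (cmod (A$2$1) * norm x + cmod (A$2$2) * norm x)"
    by (intro add_mono order_trans[OF norm_triangle_ineq])
       (simp_all add: norm_mult mult_left_mono x)
  finally show "norm (A *v x) \<le> (cmod (A$1$1) + cmod (A$1$2) + cmod (A$2$1) + cmod (A$2$2)) * norm x"
    by (simp add: algebra_simps)
qed

lemma norm_component_le_opnorm:
  fixes A :: "complex^2^2"
  shows "cmod (A$i$j) \<le> opnorm A"
proof -
  have "(A *v axis j 1) $ i = A$i$j"
    by (simp add: matrix_vector_mult_def axis_def if_distrib sum.delta' cong: if_cong)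
  then have "cmod (A$i$j) \<le> norm (A *v axis j 1)"
    using Finite_Cartesian_Product.norm_nth_le[of "A *v axis j 1" i] by simp
  also have "\<dots> \<le> opnorm A * norm (axis j (1::complex))"
    unfolding opnorm_def by (rule onorm[OF matrix_vector_mul_bounded_linear])
  finally show ?thesis by (simp add: norm_axis_1)
qed

lemma norm_sq_mat2:
  fixes A :: "complex^2^2"
  shows "(norm A)\<^sup>2 = (cmod (A$1$1))\<^sup>2 + (cmod (A$1$2))\<^sup>2 + (cmod (A$2$1))\<^sup>2 + (cmod (A$2$2))\<^sup>2"
  by (simp add: norm_vec_def L2_set_def sum_2)

lemma opnorm_le_twice_norm:
  fixes A :: "complex^2^2"
  shows "opnorm A \<le> 2 * norm A"
proof (rule power2_le_imp_le)
  define a where "a = cmod (A$1$1)"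
  define b where "b = cmod (A$1$2)"
  define c where "c = cmod (A$2$1)"
  define d where "d = cmod (A$2$2)"
  have "(opnorm A)\<^sup>2 \<le> (a + b + c + d)\<^sup>2"
    using opnorm_le_sum_components[of A] opnorm_nonneg[of A] unfolding a_def b_def c_def d_def
    by (intro power_mono) auto
  also have "\<dots> \<le> 4 * (a\<^sup>2 + b\<^sup>2 + c\<^sup>2 + d\<^sup>2)"
  proof -
    have "4 * (a\<^sup>2 + b\<^sup>2 + c\<^sup>2 + d\<^sup>2) - (a + b + c + d)\<^sup>2
        = (a - b)\<^sup>2 + (a - c)\<^sup>2 + (a - d)\<^sup>2 + (b - c)\<^sup>2 + (b - d)\<^sup>2 + (c - d)\<^sup>2"
      by (simp add: power2_eq_square algebra_simps)
    moreover have "0 \<le> (a - b)\<^sup>2 + (a - c)\<^sup>2 + (a - d)\<^sup>2 + (b - c)\<^sup>2 + (b - d)\<^sup>2 + (c - d)\<^sup>2"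
      by simp
    ultimately show ?thesis by linarith
  qed
  also have "\<dots> = (2 * norm A)\<^sup>2"
    using norm_sq_mat2[of A] by (simp add: power_mult_distrib a_def b_def c_def d_def)
  finally show "(opnorm A)\<^sup>2 \<le> (2 * norm A)\<^sup>2" .
qed simp

lemma norm_le_twice_opnorm:
  fixes A :: "complex^2^2"
  shows "norm A \<le> 2 * opnorm A"
proof (rule power2_le_imp_le)
  have "(cmod (A$i$j))\<^sup>2 \<le> (opnorm A)\<^sup>2" for i j
    using norm_component_le_opnorm[of A i j] by (intro power_mono) auto
  from this[of 1 1] this[of 1 2] this[of 2 1] this[of 2 2]
  show "(norm A)\<^sup>2 \<le> (2 * opnorm A)\<^sup>2"
    unfolding norm_sq_mat2 by (simp add: power_mult_distrib)
qed (simp add: opnorm_nonneg)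

lemma two_cmod_det_le_norm_sq:
  fixes A :: "complex^2^2"
  shows "2 * cmod (det A) \<le> (norm A)\<^sup>2"
proof -
  have am_gm: "2 * (x * y) \<le> x\<^sup>2 + y\<^sup>2" for x y :: real
    using zero_le_power2[of "x - y"] by (simp add: power2_eq_square algebra_simps)
  have "cmod (det A) = cmod (A$1$1 * A$2$2 - A$1$2 * A$2$1)" by (simp add: det_2)
  also have "\<dots> \<le> cmod (A$1$1 * A$2$2) + cmod (A$1$2 * A$2$1)" by (rule norm_triangle_ineq4)
  finally have "cmod (det A) \<le> cmod (A$1$1) * cmod (A$2$2) + cmod (A$1$2) * cmod (A$2$1)"
    by (simp add: norm_mult)
  then show ?thesis
    using am_gm[of "cmod (A$1$1)" "cmod (A$2$2)"] am_gm[of "cmod (A$1$2)" "cmod (A$2$1)"]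
    unfolding norm_sq_mat2 by linarith
qed

lemma opnorm_pos_if_det_eq_1:
  fixes A :: "complex^2^2"
  assumes "det A = 1"
  shows "0 < opnorm A"
proof -
  have "2 \<le> (norm A)\<^sup>2" using two_cmod_det_le_norm_sq[of A] assms by simp
  then have "norm A \<noteq> 0" by auto
  then have "0 < norm A" by simp
  then show ?thesis using norm_le_twice_opnorm[of A] by linarith
qed

lemma opnorm_lower_shear_le: "opnorm (lower_shear c) \<le> 2 + cmod c"
  using opnorm_le_sum_components[of "lower_shear c"] by (simp add: lower_shear_def)

lemma opnorm_upper_shear_le: "opnorm (upper_shear c) \<le> 2 + cmod c"
  using opnorm_le_sum_components[of "upper_shear c"] by (simp add: upper_shear_def)

lemma opnorm_shear_sandwich_le:
  "opnorm (upper_shear a ** B ** lower_shear c) \<le> (2 + cmod a) * (2 + cmod c) * opnorm B"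
proof -
  have "opnorm (upper_shear a ** B ** lower_shear c)
      \<le> opnorm (upper_shear a) * opnorm B * opnorm (lower_shear c)"
    by (rule opnorm_sandwich_le)
  also have "\<dots> \<le> (2 + cmod a) * opnorm B * (2 + cmod c)"
    by (intro mult_mono opnorm_upper_shear_le opnorm_lower_shear_le)
       (auto simp: opnorm_nonneg add_nonneg_nonneg)
  finally show ?thesis by (simp add: algebra_simps)
qed

lemma opnorm_lipschitz: "2-lipschitz_on UNIV (opnorm :: complex^2^2 \<Rightarrow> real)"
proof (rule lipschitz_onI)
  have triangle: "opnorm A \<le> opnorm B + 2 * dist A B" for A B :: "complex^2^2"
  proof -
    have "(*v) A = (\<lambda>x. (A - B) *v x + B *v x)"
      by (rule ext) (simp add: matrix_vector_mult_diff_rdistrib)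
    then have "opnorm A \<le> opnorm (A - B) + opnorm B"
      unfolding opnorm_def
      using onorm_triangle[OF matrix_vector_mul_bounded_linear matrix_vector_mul_bounded_linear]
      by metis
    then show ?thesis using opnorm_le_twice_norm[of "A - B"] by (simp add: dist_norm)
  qed
  fix A B :: "complex^2^2"
  show "dist (opnorm A) (opnorm B) \<le> 2 * dist A B"
    using triangle[of A B] triangle[of B A] dist_commute[of A B]
    by (simp add: dist_real_def abs_le_iff)
qed simp

section \<open>Transfer matrices\<close>

lemma Ttrans_vtilde_prefix:
  assumes "1 \<le> n" "n < N"
  shows "Ttrans (vtilde v N zl zr) n E = Ttrans (\<lambda>k. of_real (v k)) n E ** lower_shear (\<i> * of_real zl)"
  using assms
proof (induction n)
  case (Suc n)
  show ?case
  proof (cases "n = 0")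
    case True
    then show ?thesis
      by (simp add: mat2_one Astep_def vtilde_def lower_shear_def mat2_mult algebra_simps)
  next
    case False
    then have "Astep (vtilde v N zl zr) (Suc n) E = Astep (\<lambda>k. of_real (v k)) (Suc n) E"
      using Suc.prems by (simp add: Astep_def vtilde_def)
    then show ?thesis using False Suc by (simp add: matrix_mul_assoc)
  qed
qed simp

lemma Ttrans_vtilde:
  assumes "2 \<le> N"
  shows "Ttrans (vtilde v N zl zr) N E
       = upper_shear (- \<i> * of_real zr) ** Ttrans (\<lambda>k. of_real (v k)) N E ** lower_shear (\<i> * of_real zl)"
proof -
  obtain m where m: "N = Suc m" "1 \<le> m" using assms by (cases N) auto
  have "Astep (vtilde v N zl zr) N E = upper_shear (- \<i> * of_real zr) ** Astep (\<lambda>k. of_real (v k)) N E"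
    using m by (simp add: Astep_def vtilde_def upper_shear_def mat2_mult algebra_simps)
  then show ?thesis
    using Ttrans_vtilde_prefix[of m N v zl zr E] m by (simp add: matrix_mul_assoc)
qed

lemma Ttrans_of_real_eq_vtilde:
  assumes "2 \<le> N"
  shows "Ttrans (\<lambda>k. of_real (v k)) N E
       = upper_shear (\<i> * of_real zr) ** Ttrans (vtilde v N zl zr) N E ** lower_shear (- \<i> * of_real zl)"
proof -
  have "upper_shear (\<i> * of_real zr) ** Ttrans (vtilde v N zl zr) N E ** lower_shear (- \<i> * of_real zl)
      = (upper_shear (\<i> * of_real zr) ** upper_shear (- \<i> * of_real zr)) ** Ttrans (\<lambda>k. of_real (v k)) N E
          ** (lower_shear (\<i> * of_real zl) ** lower_shear (- \<i> * of_real zl))"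
    using Ttrans_vtilde[OF assms] by (simp add: matrix_mul_assoc)
  then show ?thesis by (simp add: upper_shear_mult lower_shear_mult upper_shear_0 lower_shear_0)
qed

lemma opnorm_Ttrans_vtilde_le:
  assumes "2 \<le> N"
  shows "opnorm (Ttrans (vtilde v N zl zr) N E)
       \<le> (2 + \<bar>zr\<bar>) * (2 + \<bar>zl\<bar>) * opnorm (Ttrans (\<lambda>k. of_real (v k)) N E)"
  using opnorm_shear_sandwich_le[of "- \<i> * of_real zr" _ "\<i> * of_real zl"]
  by (simp add: Ttrans_vtilde[OF assms] norm_mult)

lemma opnorm_Ttrans_le_vtilde:
  assumes "2 \<le> N"
  shows "opnorm (Ttrans (\<lambda>k. of_real (v k)) N E)
       \<le> (2 + \<bar>zr\<bar>) * (2 + \<bar>zl\<bar>) * opnorm (Ttrans (vtilde v N zl zr) N E)"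
proof -
  have "opnorm (Ttrans (\<lambda>k. of_real (v k)) N E)
      = opnorm (upper_shear (\<i> * of_real zr) ** Ttrans (vtilde v N zl zr) N E ** lower_shear (- \<i> * of_real zl))"
    by (rule arg_cong[where f = opnorm, OF Ttrans_of_real_eq_vtilde[OF assms]])
  also have "\<dots> \<le> (2 + cmod (\<i> * of_real zr)) * (2 + cmod (- \<i> * of_real zl))
                   * opnorm (Ttrans (vtilde v N zl zr) N E)"
    by (rule opnorm_shear_sandwich_le)
  finally show ?thesis by (simp add: norm_mult)
qed

lemma opnorm_Ttrans_vtilde_comparable:
  assumes "0 \<le> zl" "0 \<le> zr" "2 \<le> N"
  shows "1 / ((2 + zr) * (2 + zl)) * opnorm (Ttrans (\<lambda>k. of_real (v k)) N E)
           \<le> opnorm (Ttrans (vtilde v N zl zr) N E)"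
    and "opnorm (Ttrans (vtilde v N zl zr) N E)
           \<le> (2 + zr) * (2 + zl) * opnorm (Ttrans (\<lambda>k. of_real (v k)) N E)"
proof -
  have abs: "\<bar>zl\<bar> = zl" "\<bar>zr\<bar> = zr" using assms by simp_all
  have pos: "0 < (2 + zr) * (2 + zl)" using assms by (simp add: add_pos_nonneg)
  have le: "opnorm (Ttrans (\<lambda>k. of_real (v k)) N E)
      \<le> (2 + zr) * (2 + zl) * opnorm (Ttrans (vtilde v N zl zr) N E)"
    using opnorm_Ttrans_le_vtilde[OF assms(3), where v = v and zl = zl and zr = zr and E = E]
    unfolding abs .
  have "opnorm (Ttrans (\<lambda>k. of_real (v k)) N E) / ((2 + zr) * (2 + zl))
      \<le> opnorm (Ttrans (vtilde v N zl zr) N E)"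
    unfolding pos_divide_le_eq[OF pos] using le by (simp only: mult.commute)
  then show "1 / ((2 + zr) * (2 + zl)) * opnorm (Ttrans (\<lambda>k. of_real (v k)) N E)
           \<le> opnorm (Ttrans (vtilde v N zl zr) N E)"
    by simp
  show "opnorm (Ttrans (vtilde v N zl zr) N E)
           \<le> (2 + zr) * (2 + zl) * opnorm (Ttrans (\<lambda>k. of_real (v k)) N E)"
    using opnorm_Ttrans_vtilde_le[OF assms(3), where v = v and zl = zl and zr = zr and E = E]
    unfolding abs .
qed

lemma Im_Ttrans_of_real: "Im (Ttrans (\<lambda>k. of_real (v k)) n E $ i $ j) = 0"
proof (induction n arbitrary: i j)
  case (Suc n)
  then show ?case
    using exhaust_2[of i] by (auto simp: matrix_matrix_mult_def sum_2 Astep_def mat2_def)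
qed (simp add: Finite_Cartesian_Product.mat_def)

lemma det_Ttrans: "det (Ttrans u n E) = 1"
  by (induction n) (simp_all add: det_mul det_I Astep_def det_mat2)

lemma shear_sandwich_corner:
  "(upper_shear (- \<i> * of_real zr) ** T ** lower_shear (\<i> * of_real zl)) $ 1 $ 1
     = T$1$1 + \<i> * zl * T$1$2 - \<i> * zr * T$2$1 + zl * zr * T$2$2"
  by (simp add: upper_shear_def lower_shear_def matrix_matrix_mult_def sum_2 algebra_simps)

lemma norm_sq_real_mat2:
  fixes T :: "complex^2^2"
  assumes "\<And>i j. Im (T$i$j) = 0"
  shows "(norm T)\<^sup>2 = (Re (T$1$1))\<^sup>2 + (Re (T$1$2))\<^sup>2 + (Re (T$2$1))\<^sup>2 + (Re (T$2$2))\<^sup>2"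
  using assms by (simp add: norm_sq_mat2 cmod_eq_Re)

lemma cmod_sq_shear_sandwich_corner:
  fixes T :: "complex^2^2"
  assumes real: "\<And>i j. Im (T$i$j) = 0" and det: "det T = 1"
  shows "(cmod ((upper_shear (- \<i> * of_real zr) ** T ** lower_shear (\<i> * of_real zl)) $ 1 $ 1))\<^sup>2
       = (Re (T$1$1))\<^sup>2 + (zl * zr)\<^sup>2 * (Re (T$2$2))\<^sup>2 + zl\<^sup>2 * (Re (T$1$2))\<^sup>2
         + zr\<^sup>2 * (Re (T$2$1))\<^sup>2 + 2 * zl * zr"
proof -
  define t11 where "t11 = Re (T$1$1)"
  define t12 where "t12 = Re (T$1$2)"
  define t21 where "t21 = Re (T$2$1)"
  define t22 where "t22 = Re (T$2$2)"
  have e: "T$1$1 = of_real t11" "T$1$2 = of_real t12" "T$2$1 = of_real t21" "T$2$2 = of_real t22"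
    unfolding t11_def t12_def t21_def t22_def by (simp_all add: complex_eq_iff real)
  have det': "t11 * t22 - t12 * t21 = 1"
    using det unfolding det_2 e by (metis of_real_1 of_real_diff of_real_eq_iff of_real_mult)
  have "T$1$1 + \<i> * zl * T$1$2 - \<i> * zr * T$2$1 + zl * zr * T$2$2
      = Complex (t11 + zl * zr * t22) (zl * t12 - zr * t21)"
    by (simp add: e Complex_eq algebra_simps)
  then have "(cmod ((upper_shear (- \<i> * of_real zr) ** T ** lower_shear (\<i> * of_real zl)) $ 1 $ 1))\<^sup>2
      = (t11 + zl * zr * t22)\<^sup>2 + (zl * t12 - zr * t21)\<^sup>2"
    unfolding shear_sandwich_corner by (simp add: cmod_power2)
  also have "\<dots> = t11\<^sup>2 + (zl * zr)\<^sup>2 * t22\<^sup>2 + zl\<^sup>2 * t12\<^sup>2 + zr\<^sup>2 * t21\<^sup>2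
                 + 2 * zl * zr * (t11 * t22 - t12 * t21)"
    by (simp add: power2_eq_square algebra_simps)
  also have "\<dots> = t11\<^sup>2 + (zl * zr)\<^sup>2 * t22\<^sup>2 + zl\<^sup>2 * t12\<^sup>2 + zr\<^sup>2 * t21\<^sup>2 + 2 * zl * zr"
    by (simp add: det')
  finally show ?thesis by (simp only: t11_def t12_def t21_def t22_def)
qed

lemma shear_sandwich_corner_lower_bound:
  fixes T :: "complex^2^2"
  assumes real: "\<And>i j. Im (T$i$j) = 0" and det: "det T = 1" and "0 \<le> zl" "0 \<le> zr"
  shows "min 1 (zl\<^sup>2) * min 1 (zr\<^sup>2) * (norm T)\<^sup>2
       \<le> (cmod ((upper_shear (- \<i> * of_real zr) ** T ** lower_shear (\<i> * of_real zl)) $ 1 $ 1))\<^sup>2"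
proof -
  define m where "m = min 1 (zl\<^sup>2) * min 1 (zr\<^sup>2)"
  have "m \<le> 1 * 1" "m \<le> zl\<^sup>2 * zr\<^sup>2" "m \<le> zl\<^sup>2 * 1" "m \<le> 1 * zr\<^sup>2"
    unfolding m_def by (intro mult_mono; simp)+
  then have m: "m \<le> 1" "m \<le> (zl * zr)\<^sup>2" "m \<le> zl\<^sup>2" "m \<le> zr\<^sup>2"
    by (simp_all add: power_mult_distrib)
  have le: "m * t\<^sup>2 \<le> c * t\<^sup>2" if "m \<le> c" for c t :: real
    using that by (simp add: mult_right_mono)
  have "m * (Re (T$1$1))\<^sup>2 + m * (Re (T$1$2))\<^sup>2 + m * (Re (T$2$1))\<^sup>2 + m * (Re (T$2$2))\<^sup>2
      \<le> (Re (T$1$1))\<^sup>2 + zl\<^sup>2 * (Re (T$1$2))\<^sup>2 + zr\<^sup>2 * (Re (T$2$1))\<^sup>2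
        + (zl * zr)\<^sup>2 * (Re (T$2$2))\<^sup>2"
    using le[OF m(1), of "Re (T$1$1)"] le[OF m(3), of "Re (T$1$2)"] le[OF m(4), of "Re (T$2$1)"]
      le[OF m(2), of "Re (T$2$2)"]
    by simp
  moreover have "0 \<le> 2 * zl * zr" using assms(3,4) by simp
  ultimately show ?thesis
    unfolding m_def[symmetric] cmod_sq_shear_sandwich_corner[OF real det] norm_sq_real_mat2[OF real]
      distrib_left
    by linarith
qed

lemma shear_sandwich_corner_upper_bound:
  fixes T :: "complex^2^2"
  assumes real: "\<And>i j. Im (T$i$j) = 0" and det: "det T = 1" and "0 \<le> zl" "0 \<le> zr"
  shows "(cmod ((upper_shear (- \<i> * of_real zr) ** T ** lower_shear (\<i> * of_real zl)) $ 1 $ 1))\<^sup>2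
       \<le> (1 + zl\<^sup>2) * (1 + zr\<^sup>2) * (norm T)\<^sup>2"
proof -
  define K where "K = (1 + zl\<^sup>2) * (1 + zr\<^sup>2)"
  have K: "K = 1 + zl\<^sup>2 + zr\<^sup>2 + (zl * zr)\<^sup>2" by (simp add: K_def algebra_simps power_mult_distrib)
  have "2 * (zl * zr) \<le> zl\<^sup>2 + zr\<^sup>2" "2 * (zl * zr) \<le> 1 + (zl * zr)\<^sup>2"
    using zero_le_power2[of "zl - zr"] zero_le_power2[of "zl * zr - 1"]
    by (simp_all add: power2_eq_square algebra_simps)
  moreover have "0 \<le> zl * zr" "0 \<le> zl\<^sup>2" "0 \<le> zr\<^sup>2" "0 \<le> (zl * zr)\<^sup>2"
    using assms(3,4) by simp_all
  ultimately have c: "1 + zl * zr \<le> K" "(zl * zr)\<^sup>2 + zl * zr \<le> K" "zl\<^sup>2 + zl * zr \<le> K"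
    "zr\<^sup>2 + zl * zr \<le> K"
    unfolding K by linarith+
  have le: "c * t\<^sup>2 \<le> K * t\<^sup>2" if "c \<le> K" for c t :: real
    using that by (simp add: mult_right_mono)
  have "(1 + zl * zr) * (Re (T$1$1))\<^sup>2 + ((zl * zr)\<^sup>2 + zl * zr) * (Re (T$2$2))\<^sup>2
        + (zl\<^sup>2 + zl * zr) * (Re (T$1$2))\<^sup>2 + (zr\<^sup>2 + zl * zr) * (Re (T$2$1))\<^sup>2
      \<le> K * (Re (T$1$1))\<^sup>2 + K * (Re (T$2$2))\<^sup>2 + K * (Re (T$1$2))\<^sup>2 + K * (Re (T$2$1))\<^sup>2"
    using le[OF c(1), of "Re (T$1$1)"] le[OF c(2), of "Re (T$2$2)"] le[OF c(3), of "Re (T$1$2)"]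
      le[OF c(4), of "Re (T$2$1)"]
    by linarith
  moreover have "2 \<le> (norm T)\<^sup>2" using two_cmod_det_le_norm_sq[of T] det by simp
  then have "2 * zl * zr \<le> zl * zr * (norm T)\<^sup>2"
    using mult_left_mono[of 2 "(norm T)\<^sup>2" "zl * zr"] assms(3,4) by (simp add: mult_ac)
  ultimately show ?thesis
    unfolding K_def[symmetric] cmod_sq_shear_sandwich_corner[OF real det]
    using norm_sq_real_mat2[OF real] by (simp add: algebra_simps)
qed

section \<open>Dirichlet solutions\<close>

fun dirichlet_sol :: "(nat \<Rightarrow> complex) \<Rightarrow> complex \<Rightarrow> nat \<Rightarrow> complex" where
  "dirichlet_sol u z 0 = 0"
| "dirichlet_sol u z (Suc 0) = 1"
| "dirichlet_sol u z (Suc (Suc n)) = (u (Suc n) - z) * dirichlet_sol u z (Suc n) - dirichlet_sol u z n"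

lemma Ttrans_first_column:
  "Ttrans u n E $ 1 $ 1 = dirichlet_sol u (of_real E) (Suc n) \<and>
   Ttrans u n E $ 2 $ 1 = dirichlet_sol u (of_real E) n"
  by (induction n) (simp_all add: mat2_one matrix_matrix_mult_def sum_2 Astep_def)

lemma cmod_sq_dirichlet_sol_vtilde_bounds:
  fixes v :: "nat \<Rightarrow> real" and E :: real
  assumes "2 \<le> N" "0 \<le> zl" "0 \<le> zr"
  defines "T \<equiv> Ttrans (\<lambda>k. of_real (v k)) N E"
    and "D \<equiv> dirichlet_sol (vtilde v N zl zr) (of_real E) (Suc N)"
  shows "min 1 (zl\<^sup>2) * min 1 (zr\<^sup>2) / 4 * (opnorm T)\<^sup>2 \<le> (cmod D)\<^sup>2"
    and "(cmod D)\<^sup>2 \<le> 4 * ((1 + zl\<^sup>2) * (1 + zr\<^sup>2)) * (opnorm T)\<^sup>2"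
proof -
  have D: "D = (upper_shear (- \<i> * of_real zr) ** T ** lower_shear (\<i> * of_real zl)) $ 1 $ 1"
    using Ttrans_first_column[of "vtilde v N zl zr" N E] Ttrans_vtilde[OF assms(1)]
    by (simp add: D_def T_def)
  have real: "\<And>i j. Im (T$i$j) = 0" and det: "det T = 1"
    by (simp_all add: T_def Im_Ttrans_of_real det_Ttrans)
  have "(opnorm T)\<^sup>2 \<le> (2 * norm T)\<^sup>2" "(norm T)\<^sup>2 \<le> (2 * opnorm T)\<^sup>2"
    by (intro power_mono opnorm_le_twice_norm norm_le_twice_opnorm opnorm_nonneg norm_ge_zero)+
  then have opn: "(opnorm T)\<^sup>2 \<le> 4 * (norm T)\<^sup>2" "(norm T)\<^sup>2 \<le> 4 * (opnorm T)\<^sup>2"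
    by (simp_all add: power_mult_distrib)
  have lower: "min 1 (zl\<^sup>2) * min 1 (zr\<^sup>2) * (norm T)\<^sup>2 \<le> (cmod D)\<^sup>2"
    unfolding D by (rule shear_sandwich_corner_lower_bound[OF real det assms(2,3)])
  have upper: "(cmod D)\<^sup>2 \<le> (1 + zl\<^sup>2) * (1 + zr\<^sup>2) * (norm T)\<^sup>2"
    unfolding D by (rule shear_sandwich_corner_upper_bound[OF real det assms(2,3)])
  show "min 1 (zl\<^sup>2) * min 1 (zr\<^sup>2) / 4 * (opnorm T)\<^sup>2 \<le> (cmod D)\<^sup>2"
    using mult_left_mono[OF opn(1), of "min 1 (zl\<^sup>2) * min 1 (zr\<^sup>2) / 4"] lower by simp
  show "(cmod D)\<^sup>2 \<le> 4 * ((1 + zl\<^sup>2) * (1 + zr\<^sup>2)) * (opnorm T)\<^sup>2"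
    using mult_left_mono[OF opn(2), of "(1 + zl\<^sup>2) * (1 + zr\<^sup>2)"] upper by simp
qed


text \<open>Conservation of the current Im (conj psi(n) psi(n+1)): it can only change through the
  imaginary part of the potential.\<close>

lemma Im_cnj_dirichlet_sol_mult:
  "Im (cnj (dirichlet_sol u z n) * dirichlet_sol u z (Suc n))
     = (\<Sum>s=1..n. (Im (u s) - Im z) * (cmod (dirichlet_sol u z s))\<^sup>2)"
proof (induction n)
  case (Suc n)
  define a where "a = dirichlet_sol u z n"
  define b where "b = dirichlet_sol u z (Suc n)"
  have "Im (cnj b * ((u (Suc n) - z) * b - a)) = (Im (u (Suc n)) - Im z) * (cmod b)\<^sup>2 + Im (cnj a * b)"
    using cmod_power2[of b] by (simp add: power2_eq_square algebra_simps)
  then show ?case using Suc by (simp add: a_def b_def)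
qed simp

lemma dirichlet_sol_nonzero:
  assumes "Im (u 1) < 0" "\<And>s. Im (u s) \<le> 0" "0 \<le> Im z" "1 \<le> n"
  shows "dirichlet_sol u z (Suc n) \<noteq> 0"
proof
  assume zero: "dirichlet_sol u z (Suc n) = 0"
  let ?f = "\<lambda>s. (Im (u s) - Im z) * (cmod (dirichlet_sol u z s))\<^sup>2"
  have "sum ?f {1..n} = 0" using Im_cnj_dirichlet_sol_mult[of u z n] zero by simp
  moreover have "sum ?f {1..n} = ?f 1 + sum ?f {Suc 1..n}"
    using assms(4) by (rule sum.atLeast_Suc_atMost)
  moreover have "sum ?f {Suc 1..n} \<le> 0"
  proof (intro sum_nonpos mult_nonpos_nonneg)
    show "Im (u s) - Im z \<le> 0" for s using assms(2)[of s] assms(3) by linarith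
  qed simp
  moreover have "?f 1 < 0" using assms(1,3) by simp
  ultimately show False by linarith
qed

lemma dirichlet_sol_holomorphic: "(\<lambda>z. dirichlet_sol u z n) holomorphic_on UNIV"
proof -
  have "(\<lambda>z. dirichlet_sol u z n) holomorphic_on UNIV \<and> (\<lambda>z. dirichlet_sol u z (Suc n)) holomorphic_on UNIV"
    by (induction n) (auto intro!: holomorphic_intros)
  then show ?thesis by simp
qed

lemma dirichlet_sol_asymptotic:
  "((\<lambda>z. dirichlet_sol u z (Suc n) / z ^ n) \<longlongrightarrow> (-1) ^ n) at_infinity"
proof -
  have c_inverse: "((\<lambda>z::complex. c * inverse z) \<longlongrightarrow> 0) at_infinity" for c
    by (rule tendsto_mult_right_zero[OF tendsto_inverse_0])
  have "((\<lambda>z. dirichlet_sol u z (Suc n) / z ^ n) \<longlongrightarrow> (-1) ^ n) at_infinity \<and>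
        ((\<lambda>z. dirichlet_sol u z (Suc (Suc n)) / z ^ Suc n) \<longlongrightarrow> (-1) ^ Suc n) at_infinity"
  proof (induction n)
    case 0
    have "((\<lambda>z. u 1 * inverse z - 1) \<longlongrightarrow> 0 - 1) at_infinity"
      by (intro tendsto_diff c_inverse tendsto_const)
    moreover have "\<forall>\<^sub>F z in at_infinity. u 1 * inverse z - 1 = dirichlet_sol u z 2 / z"
      using eventually_not_equal_at_infinity[of 0]
      by eventually_elim (simp add: field_simps numeral_2_eq_2)
    ultimately show ?case by (simp add: numeral_2_eq_2 Lim_transform_eventually)
  next
    case (Suc n)
    then have A: "((\<lambda>z. dirichlet_sol u z (Suc n) / z ^ n) \<longlongrightarrow> (-1) ^ n) at_infinity"
      and B: "((\<lambda>z. dirichlet_sol u z (Suc (Suc n)) / z ^ Suc n) \<longlongrightarrow> (-1) ^ Suc n) at_infinity"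
      by auto
    have "((\<lambda>z. (u (Suc (Suc n)) * inverse z - 1) * (dirichlet_sol u z (Suc (Suc n)) / z ^ Suc n)
              - (inverse z * inverse z) * (dirichlet_sol u z (Suc n) / z ^ n))
          \<longlongrightarrow> (0 - 1) * (-1) ^ Suc n - (0 * 0) * (-1) ^ n) at_infinity"
      by (intro tendsto_diff tendsto_mult c_inverse tendsto_const A B tendsto_inverse_0)
    moreover have "\<forall>\<^sub>F z in at_infinity.
        (u (Suc (Suc n)) * inverse z - 1) * (dirichlet_sol u z (Suc (Suc n)) / z ^ Suc n)
          - (inverse z * inverse z) * (dirichlet_sol u z (Suc n) / z ^ n)
        = dirichlet_sol u z (Suc (Suc (Suc n))) / z ^ Suc (Suc n)"
      using eventually_not_equal_at_infinity[of 0] by eventually_elim (simp add: field_simps)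
    ultimately show ?case using B by (simp add: Lim_transform_eventually)
  qed
  then show ?thesis by simp
qed

definition dirichlet_ratio :: "(nat \<Rightarrow> complex) \<Rightarrow> nat \<Rightarrow> nat \<Rightarrow> complex \<Rightarrow> complex" where
  "dirichlet_ratio u N j z = dirichlet_sol u z j / dirichlet_sol u z (Suc N)"

lemma dirichlet_ratio_asymptotic:
  assumes "m < N"
  shows "((\<lambda>z. z * dirichlet_ratio u N (Suc m) z) \<longlongrightarrow> (if Suc m = N then -1 else 0)) at_infinity"
proof -
  define k where "k = N - Suc m"
  have N: "N = Suc m + k" using assms by (simp add: k_def)
  have "((\<lambda>z. (dirichlet_sol u z (Suc m) / z ^ m) / (dirichlet_sol u z (Suc N) / z ^ N) * inverse z ^ k)
      \<longlongrightarrow> ((-1) ^ m / (-1) ^ N) * 0 ^ k) at_infinity"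
    by (intro tendsto_mult tendsto_divide dirichlet_sol_asymptotic tendsto_power tendsto_inverse_0) simp
  moreover have "\<forall>\<^sub>F z in at_infinity.
      (dirichlet_sol u z (Suc m) / z ^ m) / (dirichlet_sol u z (Suc N) / z ^ N) * inverse z ^ k
      = z * dirichlet_ratio u N (Suc m) z"
    using eventually_not_equal_at_infinity[of 0]
    by eventually_elim (simp add: dirichlet_ratio_def N field_simps power_add)
  moreover have "((-1) ^ m / (-1) ^ N) * (0::complex) ^ k = (if Suc m = N then -1 else 0)"
    using N by (cases k) auto
  ultimately show ?thesis by (simp add: Lim_transform_eventually)
qed

section \<open>Real-line integrals by contour integration\<close>

lemma part_circlepath_upper_half_plane:
  assumes "0 \<le> L"
  shows "path_image (part_circlepath 0 L 0 pi) \<subseteq> {z. 0 \<le> Im z}"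
proof
  fix z assume "z \<in> path_image (part_circlepath 0 L 0 pi)"
  then obtain t where t: "0 \<le> t" "t \<le> pi" "z = of_real L * exp (\<i> * of_real t)"
    by (auto simp: path_image_part_circlepath)
  have "Im (exp (\<i> * complex_of_real t)) = sin t" using Im_exp[of "\<i> * of_real t"] by simp
  then show "z \<in> {z. 0 \<le> Im z}" using assms t by (simp add: sin_ge_zero)
qed

lemma norm_on_part_circlepath:
  "0 \<le> L \<Longrightarrow> z \<in> path_image (part_circlepath 0 L 0 pi) \<Longrightarrow> norm z = L"
  using path_image_part_circlepath_subset[of 0 pi L 0] by auto

lemma contour_integral_part_circlepath_inverse:
  assumes "0 < L"
  shows "contour_integral (part_circlepath 0 L 0 pi) (\<lambda>z. c / z) = \<i> * pi * c"
proof -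
  have "contour_integral (part_circlepath 0 L 0 pi) (\<lambda>z. c / z)
      = integral {0..pi} (\<lambda>t. c / (0 + complex_of_real L * cis t) * complex_of_real L * \<i> * cis t)"
    by (rule contour_integral_part_circlepath_eq) simp
  also have "\<dots> = integral {0..pi} (\<lambda>t. c * \<i>)"
    using assms by (intro integral_cong) (simp add: field_simps)
  also have "\<dots> = \<i> * pi * c" by (simp add: scaleR_conv_of_real mult_ac)
  finally show ?thesis .
qed

text \<open>Cauchy's theorem on the closed upper half disc of radius L.\<close>

lemma integral_real_segment_eq_half_circle:
  fixes f :: "complex \<Rightarrow> complex"
  assumes cont: "continuous_on {z. 0 \<le> Im z} f"
    and diff: "\<And>z. 0 \<le> Im z \<Longrightarrow> f field_differentiable at z"
    and L: "0 < L"
  shows "integral {-L..L} (\<lambda>x. f (of_real x)) = - contour_integral (part_circlepath 0 L 0 pi) f"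
proof -
  let ?S = "{z. 0 \<le> Im z}"
  let ?l = "linepath (- complex_of_real L) (complex_of_real L)"
  let ?a = "part_circlepath 0 L 0 pi"
  have seg: "closed_segment (- complex_of_real L) (complex_of_real L) \<subseteq> ?S"
    by (rule closed_segment_subset) (auto intro: convex_halfspace_Im_ge)
  have arc: "path_image ?a \<subseteq> ?S" using L by (intro part_circlepath_upper_half_plane) simp
  have il: "f contour_integrable_on ?l"
    by (rule contour_integrable_continuous_linepath) (rule continuous_on_subset[OF cont seg])
  have ia: "f contour_integrable_on ?a"
    by (rule contour_integrable_continuous_part_circlepath) (rule continuous_on_subset[OF cont arc])
  have ends: "pathfinish ?a = pathstart ?l" "pathfinish ?l = pathstart ?a"
    by (simp_all add: exp_Euler)
  have "(f has_contour_integral 0) (?l +++ ?a)"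
  proof (rule Cauchy_theorem_convex[of ?S f "{}"])
    show "f field_differentiable at x" if "x \<in> interior ?S - {}" for x
      using that interior_subset[of ?S] diff by blast
    show "valid_path (?l +++ ?a)" using ends by (intro valid_path_join) auto
    show "path_image (?l +++ ?a) \<subseteq> ?S"
      using ends seg arc by (subst path_image_join) auto
  qed (use cont convex_halfspace_Im_ge ends in auto)
  moreover have "(f has_contour_integral (contour_integral ?l f + contour_integral ?a f)) (?l +++ ?a)"
    by (intro has_contour_integral_join has_contour_integral_integral il ia) auto
  ultimately have sum0: "contour_integral ?l f + contour_integral ?a f = 0"
    using has_contour_integral_unique by blast
  have "((\<lambda>x. f (of_real x)) has_integral (contour_integral ?l f)) {-L..L}"
    using has_contour_integral_integral[OF il] L
    by (subst (asm) has_contour_integral_linepath_Reals_iff) auto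
  then show ?thesis using sum0 by (simp add: integral_unique eq_neg_iff_add_eq_0)
qed

lemma tendsto_contour_integral_half_circle:
  fixes f :: "complex \<Rightarrow> complex"
  assumes cont: "continuous_on {z. 0 \<le> Im z} f"
    and lim: "((\<lambda>z. z * f z) \<longlongrightarrow> c) at_infinity"
  shows "((\<lambda>L. contour_integral (part_circlepath 0 L 0 pi) f) \<longlongrightarrow> \<i> * pi * c) at_top"
proof (rule tendstoI)
  fix e :: real assume e: "0 < e"
  define \<epsilon> where "\<epsilon> = e / (2 * pi)"
  have \<epsilon>: "0 < \<epsilon>" using e by (simp add: \<epsilon>_def)
  obtain R where R: "\<And>z. R \<le> norm z \<Longrightarrow> dist (z * f z) c < \<epsilon>"
    using tendstoD[OF lim \<epsilon>] unfolding eventually_at_infinity by blast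
  show "\<forall>\<^sub>F L in at_top. dist (contour_integral (part_circlepath 0 L 0 pi) f) (\<i> * pi * c) < e"
    using eventually_ge_at_top[of "max R 1"]
  proof eventually_elim
    case (elim L)
    then have L: "0 < L" "R \<le> L" by auto
    let ?a = "part_circlepath 0 L 0 pi"
    have norm_a: "norm z = L" if "z \<in> path_image ?a" for z
      using norm_on_part_circlepath[OF _ that] L by simp
    have ia: "f contour_integrable_on ?a"
      using part_circlepath_upper_half_plane[of L] L
      by (intro contour_integrable_continuous_part_circlepath continuous_on_subset[OF cont]) auto
    have ib: "(\<lambda>z. c / z) contour_integrable_on ?a"
      using norm_a L
      by (intro contour_integrable_continuous_part_circlepath continuous_intros) force
    have eq: "contour_integral ?a f - \<i> * pi * c = contour_integral ?a (\<lambda>z. f z - c / z)"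
      using contour_integral_diff[OF ia ib] contour_integral_part_circlepath_inverse[OF L(1), of c]
      by simp
    have bd: "cmod (f z - c / z) \<le> \<epsilon> / L" if "z \<in> path_image ?a" for z
    proof -
      have "f z - c / z = (z * f z - c) / z" using norm_a[OF that] L by (auto simp: field_simps)
      then have "cmod (f z - c / z) = cmod (z * f z - c) / L" by (simp add: norm_divide norm_a[OF that])
      also have "\<dots> \<le> \<epsilon> / L" using R[of z] norm_a[OF that] L
        by (intro divide_right_mono) (auto simp: dist_norm less_imp_le)
      finally show ?thesis .
    qed
    have "cmod (contour_integral ?a (\<lambda>z. f z - c / z)) \<le> \<epsilon> / L * L * \<bar>pi - 0\<bar>"
      by (rule contour_integral_bound_part_circlepath)
         (use contour_integrable_diff[OF ia ib] bd L \<epsilon> in auto)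
    also have "\<dots> < e" using L e by (simp add: \<epsilon>_def)
    finally show ?case using eq by (simp add: dist_norm)
  qed
qed

lemma tendsto_integral_symmetric_segment:
  fixes f :: "complex \<Rightarrow> complex"
  assumes cont: "continuous_on {z. 0 \<le> Im z} f"
    and diff: "\<And>z. 0 \<le> Im z \<Longrightarrow> f field_differentiable at z"
    and lim: "((\<lambda>z. z * f z) \<longlongrightarrow> c) at_infinity"
  shows "((\<lambda>L. integral {-L..L} (\<lambda>x. f (of_real x))) \<longlongrightarrow> - (\<i> * pi * c)) at_top"
proof -
  have "((\<lambda>L. - contour_integral (part_circlepath 0 L 0 pi) f) \<longlongrightarrow> - (\<i> * pi * c)) at_top"
    by (intro tendsto_minus tendsto_contour_integral_half_circle[OF cont lim])
  moreover have "\<forall>\<^sub>F L in at_top. - contour_integral (part_circlepath 0 L 0 pi) f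
                  = integral {-L..L} (\<lambda>x. f (of_real x))"
    using eventually_gt_at_top[of 0]
    by eventually_elim (simp add: integral_real_segment_eq_half_circle[OF cont diff])
  ultimately show ?thesis by (simp add: Lim_transform_eventually)
qed

lemma lebesgue_integral_eq_lim_symmetric_segment:
  fixes g :: "real \<Rightarrow> complex"
  assumes int: "integrable lborel g" and lim: "((\<lambda>L. integral {-L..L} g) \<longlongrightarrow> I) at_top"
  shows "integral\<^sup>L lborel g = I"
proof -
  have eq: "integral {-L..L} g = (LINT x|lborel. indicator {-L..L} x *\<^sub>R g x)" for L
  proof -
    have "set_integrable lborel {-L..L} g"
      unfolding set_integrable_def by (rule integrable_mult_indicator) (auto intro: int)
    then show ?thesis
      using set_borel_integral_eq_integral(2) by (metis set_lebesgue_integral_def)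
  qed
  have "((\<lambda>L. LINT x|lborel. indicator {-L..L} x *\<^sub>R g x) \<longlongrightarrow> integral\<^sup>L lborel g) at_top"
  proof (rule integral_dominated_convergence_at_top[where w = "\<lambda>x. norm (g x)"])
    show "AE x in lborel. ((\<lambda>L. indicator {-L..L} x *\<^sub>R g x) \<longlongrightarrow> g x) at_top"
    proof (rule AE_I2)
      fix x :: real
      have "\<forall>\<^sub>F L in at_top. indicator {-L..L} x *\<^sub>R g x = g x"
        using eventually_ge_at_top[of "\<bar>x\<bar>"] by eventually_elim (auto simp: indicator_def)
      then show "((\<lambda>L. indicator {-L..L} x *\<^sub>R g x) \<longlongrightarrow> g x) at_top"
        by (rule tendsto_eventually)
    qed
  qed (use int in \<open>auto intro: borel_measurable_integrable integrable_mult_indicator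
                       simp: indicator_def\<close>)
  then show ?thesis using lim eq by (simp add: tendsto_unique[OF trivial_limit_at_top_linorder])
qed

lemma norm_le_inverse_abs_eventually:
  fixes f :: "complex \<Rightarrow> complex"
  assumes "((\<lambda>z. z * f z) \<longlongrightarrow> c) at_infinity"
  obtains B R where "0 \<le> B" "\<And>x::real. R \<le> \<bar>x\<bar> \<Longrightarrow> cmod (f (of_real x)) \<le> B / \<bar>x\<bar>"
proof -
  have "\<forall>\<^sub>F z in at_infinity. dist (z * f z) c < 1" using tendstoD[OF assms, of 1] by simp
  then obtain b where b: "\<And>z. b \<le> norm z \<Longrightarrow> dist (z * f z) c < 1"
    unfolding eventually_at_infinity by blast
  have "cmod (f (of_real x)) \<le> (norm c + 1) / \<bar>x\<bar>" if x: "max b 1 \<le> \<bar>x\<bar>" for x :: real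
  proof -
    have "norm (of_real x * f (of_real x)) \<le> norm c + 1"
      using b[of "of_real x"] x norm_triangle_ineq2[of "of_real x * f (of_real x)" c]
      by (simp add: dist_norm)
    moreover have "0 < \<bar>x\<bar>" using x by linarith
    ultimately show ?thesis by (simp add: norm_mult pos_le_divide_eq mult.commute)
  qed
  then show ?thesis by (intro that[of "norm c + 1" "max b 1"]) simp_all
qed

lemma inverse_decay_mult_bound:
  fixes F G :: "real \<Rightarrow> complex"
  assumes cF: "continuous_on UNIV F" and cG: "continuous_on UNIV G"
    and dF: "0 \<le> B1" "\<And>x. R1 \<le> \<bar>x\<bar> \<Longrightarrow> cmod (F x) \<le> B1 / \<bar>x\<bar>"
    and dG: "0 \<le> B2" "\<And>x. R2 \<le> \<bar>x\<bar> \<Longrightarrow> cmod (G x) \<le> B2 / \<bar>x\<bar>"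
  obtains K where "0 \<le> K" "\<And>x. cmod (F x * G x) \<le> K * inverse (1 + x\<^sup>2)"
proof -
  define R where "R = max (max R1 R2) 1"
  have cFG: "continuous_on UNIV (\<lambda>x. F x * G x)" using cF cG by (intro continuous_intros)
  have "bounded ((\<lambda>x. F x * G x) ` {-R..R})"
    by (intro compact_imp_bounded compact_continuous_image continuous_on_subset[OF cFG]) auto
  then obtain M where M: "0 < M" "\<And>x. x \<in> {-R..R} \<Longrightarrow> cmod (F x * G x) \<le> M"
    unfolding bounded_pos by blast
  define K where "K = max (M * (1 + R\<^sup>2)) (2 * B1 * B2)"
  have bound: "cmod (F x * G x) \<le> K * inverse (1 + x\<^sup>2)" for x
  proof (cases "\<bar>x\<bar> \<le> R")
    case True
    then have "cmod (F x * G x) \<le> M" using M(2)[of x] by (simp add: abs_le_iff)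
    also have "M \<le> M * (1 + R\<^sup>2) * inverse (1 + x\<^sup>2)"
    proof -
      have "\<bar>x\<bar>\<^sup>2 \<le> R\<^sup>2" using True by (intro power_mono) auto
      then have "M * (1 + x\<^sup>2) \<le> M * (1 + R\<^sup>2)" using M by simp
      then show ?thesis by (simp add: field_simps add_pos_nonneg)
    qed
    also have "\<dots> \<le> K * inverse (1 + x\<^sup>2)" by (intro mult_right_mono) (auto simp: K_def)
    finally show ?thesis .
  next
    case False
    then have x: "R1 \<le> \<bar>x\<bar>" "R2 \<le> \<bar>x\<bar>" "1 \<le> \<bar>x\<bar>" by (auto simp: R_def)
    have "cmod (F x * G x) \<le> (B1 / \<bar>x\<bar>) * (B2 / \<bar>x\<bar>)"
      unfolding norm_mult using dF dG x by (intro mult_mono) auto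
    also have "\<dots> = B1 * B2 / x\<^sup>2" by (simp add: power2_eq_square)
    also have "\<dots> \<le> 2 * B1 * B2 * inverse (1 + x\<^sup>2)"
    proof -
      have "1\<^sup>2 \<le> \<bar>x\<bar>\<^sup>2" using x(3) by (intro power_mono) auto
      then have "B1 * B2 * (1 + x\<^sup>2) \<le> B1 * B2 * (2 * x\<^sup>2)"
        using dF(1) dG(1) by (intro mult_left_mono) auto
      moreover have "0 < x\<^sup>2" using x(3) by simp
      ultimately show ?thesis by (simp add: field_simps add_pos_nonneg)
    qed
    also have "\<dots> \<le> K * inverse (1 + x\<^sup>2)" by (intro mult_right_mono) (auto simp: K_def)
    finally show ?thesis .
  qed
  have "0 \<le> M * (1 + R\<^sup>2)" using M(1) by simp
  then have "0 \<le> K" by (simp add: K_def le_max_iff_disj)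
  from \<open>0 \<le> K\<close> bound show ?thesis by (rule that)
qed

lemma integrable_mult_of_inverse_decay:
  fixes F G :: "real \<Rightarrow> complex"
  assumes "continuous_on UNIV F" "continuous_on UNIV G"
    and "0 \<le> B1" "\<And>x. R1 \<le> \<bar>x\<bar> \<Longrightarrow> cmod (F x) \<le> B1 / \<bar>x\<bar>"
    and "0 \<le> B2" "\<And>x. R2 \<le> \<bar>x\<bar> \<Longrightarrow> cmod (G x) \<le> B2 / \<bar>x\<bar>"
  shows "integrable lborel (\<lambda>x. F x * G x)"
proof -
  obtain K where K: "0 \<le> K" "\<And>x. cmod (F x * G x) \<le> K * inverse (1 + x\<^sup>2)"
    using inverse_decay_mult_bound[OF assms] by blast
  have cont: "continuous_on UNIV (\<lambda>x. F x * G x)" using assms(1,2) by (intro continuous_intros)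
  have "integrable lborel (\<lambda>x::real. inverse (1 + x\<^sup>2))"
    using integrable_inverse_1_plus_square by (simp add: set_integrable_def einterval_iff)
  then show ?thesis
  proof (rule Bochner_Integration.integrable_bound[OF integrable_mult_right])
    show "(\<lambda>x. F x * G x) \<in> borel_measurable lborel"
      using borel_measurable_continuous_onI[OF cont] by simp
    show "AE x in lborel. norm (F x * G x) \<le> norm (K * inverse (1 + x\<^sup>2))"
      using K by (intro AE_I2) (simp add: abs_mult add_pos_nonneg)
  qed
qed

section \<open>The operator l\<close>

definition damping :: "nat \<Rightarrow> real \<Rightarrow> real \<Rightarrow> nat \<Rightarrow> real" where
  "damping N zl zr i = (if i = 0 then zl else 0) + (if i = N - 1 then zr else 0)"

definition hentry :: "(nat \<Rightarrow> real) \<Rightarrow> nat \<Rightarrow> nat \<Rightarrow> real" where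
  "hentry v i k = (if i = k then v (i + 1) else if i = k + 1 \<or> k = i + 1 then -1 else 0)"

lemma hentry_sym: "hentry v i k = hentry v k i"
  by (auto simp: hentry_def)

lemma sum_hentry_mult:
  assumes "i < N"
  shows "(\<Sum>k<N. of_real (hentry v i k) * f k) =
    of_real (v (i + 1)) * f i - (if 0 < i then f (i - 1) else 0) - (if i + 1 < N then f (i + 1) else (0::complex))"
proof -
  have "(\<Sum>k<N. of_real (hentry v i k) * f k) =
     (\<Sum>k<N. (if k = i then of_real (v (i + 1)) * f i else 0) + (if k = i - 1 \<and> 0 < i then - f k else 0)
          + (if k = i + 1 then - f k else 0))"
    by (intro sum.cong) (auto simp: hentry_def)
  also have "\<dots> = of_real (v (i + 1)) * f i + (if 0 < i then - f (i - 1) else 0)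
                 + (if i + 1 < N then - f (i + 1) else 0)"
    using assms by (simp add: sum.distrib)
  finally show ?thesis by simp
qed

definition lop_entries ::
    "nat \<Rightarrow> (nat \<Rightarrow> real) \<Rightarrow> real \<Rightarrow> real \<Rightarrow> (nat \<Rightarrow> nat \<Rightarrow> complex) \<Rightarrow> nat \<Rightarrow> nat \<Rightarrow> complex" where
  "lop_entries N v zl zr d i j =
     - \<i> * ((\<Sum>k<N. of_real (hentry v i k) * d k j) - (\<Sum>k<N. d i k * of_real (hentry v k j)))
     - of_real (damping N zl zr i + damping N zl zr j) * d i j"

lemma index_lop:
  assumes x: "x \<in> carrier_mat N N" and ij: "i < N" "j < N"
  shows "lop N v zl zr x $$ (i, j) = lop_entries N v zl zr (\<lambda>i j. x $$ (i, j)) i j"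
proof -
  define P where "P = of_real zl \<cdot>\<^sub>m proj N 1 + of_real zr \<cdot>\<^sub>m proj N N"
  have P: "P \<in> carrier_mat N N" and h: "hmat N v \<in> carrier_mat N N"
    by (simp_all add: P_def proj_def hmat_def)
  have mult: "(A * B) $$ (i, j) = (\<Sum>k<N. A $$ (i, k) * B $$ (k, j))"
    if "A \<in> carrier_mat N N" "B \<in> carrier_mat N N" for A B
    using that ij by (auto simp: scalar_prod_def atLeast0LessThan intro!: sum.cong)
  have "(P * x) $$ (i, j) = (\<Sum>k<N. if k = i then of_real (damping N zl zr i) * x $$ (i, j) else 0)"
    unfolding mult[OF P x] using ij by (intro sum.cong) (auto simp: P_def proj_def damping_def)
  moreover have "(x * P) $$ (i, j) = (\<Sum>k<N. if k = j then x $$ (i, j) * of_real (damping N zl zr j) else 0)"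
    unfolding mult[OF x P] using ij by (intro sum.cong) (auto simp: P_def proj_def damping_def)
  moreover have "(hmat N v * x) $$ (i, j) = (\<Sum>k<N. of_real (hentry v i k) * x $$ (k, j))"
    unfolding mult[OF h x] using ij by (intro sum.cong) (auto simp: hmat_def hentry_def)
  moreover have "(x * hmat N v) $$ (i, j) = (\<Sum>k<N. x $$ (i, k) * of_real (hentry v k j))"
    unfolding mult[OF x h] using ij by (intro sum.cong) (auto simp: hmat_def hentry_def)
  moreover have "lop N v zl zr x $$ (i, j)
      = - \<i> * ((hmat N v * x) $$ (i, j) - (x * hmat N v) $$ (i, j)) - ((P * x) $$ (i, j) + (x * P) $$ (i, j))"
    using x P h ij unfolding lop_def Let_def P_def[symmetric] by simp
  ultimately show ?thesis using ij by (simp add: lop_entries_def algebra_simps)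
qed

lemma lop_carrier: "x \<in> carrier_mat N N \<Longrightarrow> lop N v zl zr x \<in> carrier_mat N N"
  unfolding carrier_mat_def by (simp add: lop_def Let_def proj_def)

lemma lop_entries_diff:
  "lop_entries N v zl zr (\<lambda>i j. d i j - d' i j) i j = lop_entries N v zl zr d i j - lop_entries N v zl zr d' i j"
  by (simp add: lop_entries_def sum_subtractf algebra_simps)

lemma lop_entries_scale:
  "lop_entries N v zl zr (\<lambda>i j. c * d i j) i j = c * lop_entries N v zl zr d i j"
  by (simp add: lop_entries_def sum_distrib_left algebra_simps)

lemma lop_entries_cong:
  assumes "\<And>k l. k < N \<Longrightarrow> l < N \<Longrightarrow> d k l = d' k l" "i < N" "j < N"
  shows "lop_entries N v zl zr d i j = lop_entries N v zl zr d' i j"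
proof -
  have "(\<Sum>k<N. of_real (hentry v i k) * d k j) = (\<Sum>k<N. of_real (hentry v i k) * d' k j)"
    "(\<Sum>k<N. d i k * of_real (hentry v k j)) = (\<Sum>k<N. d' i k * of_real (hentry v k j))"
    using assms by (auto intro!: sum.cong)
  then show ?thesis using assms by (simp add: lop_entries_def)
qed

lemma integrable_lop_entries:
  fixes f :: "nat \<Rightarrow> nat \<Rightarrow> 'a \<Rightarrow> complex"
  assumes "\<And>i j. i < N \<Longrightarrow> j < N \<Longrightarrow> integrable M (f i j)" "i < N" "j < N"
  shows "integrable M (\<lambda>E. lop_entries N v zl zr (\<lambda>i j. f i j E) i j)"
  unfolding lop_entries_def using assms
  by (intro Bochner_Integration.integrable_diff integrable_mult_right Bochner_Integration.integrable_sum
        integrable_mult_left) auto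

lemma integral_lop_entries:
  fixes f :: "nat \<Rightarrow> nat \<Rightarrow> 'a \<Rightarrow> complex"
  assumes int: "\<And>i j. i < N \<Longrightarrow> j < N \<Longrightarrow> integrable M (f i j)" and ij: "i < N" "j < N"
  shows "(LINT E|M. lop_entries N v zl zr (\<lambda>i j. f i j E) i j)
       = lop_entries N v zl zr (\<lambda>i j. LINT E|M. f i j E) i j"
proof -
  have int1: "integrable M (\<lambda>E. \<Sum>k<N. of_real (hentry v i k) * f k j E)"
    and int2: "integrable M (\<lambda>E. \<Sum>k<N. f i k E * of_real (hentry v k j))"
    using int ij by (auto intro!: Bochner_Integration.integrable_sum)
  have "(LINT E|M. (\<Sum>k<N. of_real (hentry v i k) * f k j E))
      = (\<Sum>k<N. of_real (hentry v i k) * (LINT E|M. f k j E))"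
    and "(LINT E|M. (\<Sum>k<N. f i k E * of_real (hentry v k j)))
      = (\<Sum>k<N. (LINT E|M. f i k E) * of_real (hentry v k j))"
    using int ij by (subst Bochner_Integration.integral_sum; auto)+
  then show ?thesis
    using int1 int2 int[OF ij] by (simp add: lop_entries_def)
qed

lemma Im_sum_sum_eq_0_if_hermitian:
  fixes g :: "'a \<Rightarrow> 'a \<Rightarrow> complex"
  assumes "\<And>i k. cnj (g i k) = g k i"
  shows "Im (\<Sum>i\<in>I. \<Sum>k\<in>I. g i k) = 0"
proof -
  have "cnj (\<Sum>i\<in>I. \<Sum>k\<in>I. g i k) = (\<Sum>i\<in>I. \<Sum>k\<in>I. g k i)" by (simp add: assms)
  also have "\<dots> = (\<Sum>i\<in>I. \<Sum>k\<in>I. g i k)" by (rule sum.swap)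
  finally show ?thesis by (simp add: complex_eq_iff sum_negf)
qed

text \<open>Since h is Hermitian, only the damping contributes to Re tr(d* l(d)).\<close>

lemma sum_Re_cnj_lop_entries:
  "(\<Sum>i<N. \<Sum>j<N. Re (cnj (d i j) * lop_entries N v zl zr d i j))
     = - (\<Sum>i<N. \<Sum>j<N. (damping N zl zr i + damping N zl zr j) * (cmod (d i j))\<^sup>2)"
proof -
  define g where "g = damping N zl zr"
  define H1 where "H1 i j = (\<Sum>k<N. of_real (hentry v i k) * d k j)" for i j
  define H2 where "H2 i j = (\<Sum>k<N. d i k * of_real (hentry v k j))" for i j
  have re: "Re (cnj a * (- \<i> * (p - q) - of_real r * a))
      = Im (cnj a * p) - Im (cnj a * q) - r * (cmod a)\<^sup>2" for a p q :: complex and r :: real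
    using cmod_power2[of a] by (simp add: power2_eq_square algebra_simps)
  have "Im (\<Sum>i<N. \<Sum>j<N. cnj (d i j) * H1 i j) = (\<Sum>j<N. Im (\<Sum>i<N. \<Sum>k<N. cnj (d i j) * of_real (hentry v i k) * d k j))"
    unfolding H1_def by (subst sum.swap) (simp add: sum_distrib_left mult.assoc)
  also have "\<dots> = 0"
    by (intro sum.neutral ballI Im_sum_sum_eq_0_if_hermitian) (simp add: hentry_sym mult_ac)
  finally have A: "Im (\<Sum>i<N. \<Sum>j<N. cnj (d i j) * H1 i j) = 0" .
  have "Im (\<Sum>i<N. \<Sum>j<N. cnj (d i j) * H2 i j) = (\<Sum>i<N. Im (\<Sum>j<N. \<Sum>k<N. cnj (d i j) * d i k * of_real (hentry v k j)))"
    unfolding H2_def by (simp add: sum_distrib_left mult.assoc)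
  also have "\<dots> = 0"
    by (intro sum.neutral ballI Im_sum_sum_eq_0_if_hermitian) (simp add: hentry_sym mult_ac)
  finally have B: "Im (\<Sum>i<N. \<Sum>j<N. cnj (d i j) * H2 i j) = 0" .
  have "(\<Sum>i<N. \<Sum>j<N. Re (cnj (d i j) * lop_entries N v zl zr d i j))
      = (\<Sum>i<N. \<Sum>j<N. Im (cnj (d i j) * H1 i j) - Im (cnj (d i j) * H2 i j) - (g i + g j) * (cmod (d i j))\<^sup>2)"
    unfolding lop_entries_def H1_def H2_def g_def re ..
  also have "\<dots> = Im (\<Sum>i<N. \<Sum>j<N. cnj (d i j) * H1 i j) - Im (\<Sum>i<N. \<Sum>j<N. cnj (d i j) * H2 i j)
                 - (\<Sum>i<N. \<Sum>j<N. (g i + g j) * (cmod (d i j))\<^sup>2)"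
    by (simp only: Im_sum sum_subtractf)
  finally show ?thesis using A B unfolding g_def by linarith
qed

lemma lop_entries_next_row:
  assumes "Suc m < N" "j < N"
    and "\<forall>l<N. d m l = 0" and "0 < m \<Longrightarrow> \<forall>l<N. d (m - 1) l = 0"
    and "lop_entries N v zl zr d m j = 0"
  shows "d (Suc m) j = 0"
proof -
  have "(\<Sum>k<N. of_real (hentry v m k) * d k j) = - d (Suc m) j"
    using sum_hentry_mult[of m N v "\<lambda>k. d k j"] assms(1-4) by auto
  moreover have "(\<Sum>k<N. d m k * of_real (hentry v k j)) = 0" using assms(3) by simp
  ultimately show ?thesis using assms(2,3,5) by (simp add: lop_entries_def)
qed

text \<open>The damping at the first site kills the first row; the tridiagonal h then propagates the
  vanishing row by row.\<close>

lemma lop_entries_eq_0_imp_eq_0: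
  assumes "0 < zl" "0 \<le> zr"
    and zero: "\<And>i j. i < N \<Longrightarrow> j < N \<Longrightarrow> lop_entries N v zl zr d i j = 0"
    and "i < N" "j < N"
  shows "d i j = 0"
proof -
  let ?g = "damping N zl zr"
  have g: "0 \<le> ?g k" for k using assms(1,2) by (simp add: damping_def)
  have nn: "0 \<le> (?g i + ?g j) * (cmod (d i j))\<^sup>2" for i j using g[of i] g[of j] by simp
  have "(\<Sum>i<N. \<Sum>j<N. Re (cnj (d i j) * lop_entries N v zl zr d i j)) = 0"
    by (intro sum.neutral ballI) (simp add: zero)
  then have "(\<Sum>i<N. \<Sum>j<N. (?g i + ?g j) * (cmod (d i j))\<^sup>2) = 0"
    unfolding sum_Re_cnj_lop_entries by simp
  then have "\<forall>i\<in>{..<N}. (\<Sum>j<N. (?g i + ?g j) * (cmod (d i j))\<^sup>2) = 0"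
    by (subst (asm) sum_nonneg_eq_0_iff) (auto intro: sum_nonneg nn)
  then have row0_sum: "\<forall>j\<in>{..<N}. (?g 0 + ?g j) * (cmod (d 0 j))\<^sup>2 = 0"
    using assms(4) by (subst (asm) sum_nonneg_eq_0_iff) (auto intro: nn)
  have "0 < ?g 0" using assms(1,2) by (simp add: damping_def)
  have row0: "d 0 j = 0" if "j < N" for j
  proof -
    have "0 < ?g 0 + ?g j" using \<open>0 < ?g 0\<close> g[of j] by linarith
    moreover have "?g 0 + ?g j = 0 \<or> d 0 j = 0" using row0_sum that by simp
    ultimately show ?thesis by auto
  qed
  have "\<forall>j<N. d k j = 0" if "k < N" for k
    using that
  proof (induction k rule: less_induct)
    case (less k)
    show ?case
    proof (cases k)
      case (Suc m)
      have "\<forall>l<N. d m l = 0" "0 < m \<Longrightarrow> \<forall>l<N. d (m - 1) l = 0"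
        using less Suc by auto
      then show ?thesis using lop_entries_next_row[of m N _ d v zl zr] zero less.prems Suc by auto
    qed (use row0 in blast)
  qed
  then show ?thesis using assms(4,5) by blast
qed

lemma lop_injective:
  assumes "0 < zl" "0 \<le> zr" and x: "x \<in> carrier_mat N N" and y: "y \<in> carrier_mat N N"
    and eq: "lop N v zl zr x = lop N v zl zr y"
  shows "x = y"
proof -
  have "x $$ (i, j) - y $$ (i, j) = 0" if "i < N" "j < N" for i j
  proof (rule lop_entries_eq_0_imp_eq_0[OF assms(1,2) _ that])
    fix i j assume ij: "i < N" "j < N"
    have "lop_entries N v zl zr (\<lambda>i j. x $$ (i, j)) i j = lop_entries N v zl zr (\<lambda>i j. y $$ (i, j)) i j"
      by (metis eq index_lop[OF x ij] index_lop[OF y ij])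
    then show "lop_entries N v zl zr (\<lambda>i j. x $$ (i, j) - y $$ (i, j)) i j = 0"
      by (simp add: lop_entries_diff)
  qed
  then show ?thesis using x y by (intro eq_matI) auto
qed

lemma lop_inv_eqI:
  assumes "0 < zl" "0 \<le> zr" "x \<in> carrier_mat N N" "lop N v zl zr x = b"
  shows "lop_inv N v zl zr b = x"
  unfolding lop_inv_def using assms lop_injective by (intro the_equality) blast+


section \<open>The resolvent column at the right end\<close>

lemma continuous_on_Ttrans: "continuous_on UNIV (\<lambda>E. Ttrans u n E)"
proof -
  have entries: "continuous_on UNIV (\<lambda>E. Ttrans u n E $ i $ j)" for i j
  proof (induction n arbitrary: i j)
    case (Suc n)
    have A: "continuous_on UNIV (\<lambda>E. Astep u (Suc n) E $ i $ k)" for k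
    proof -
      have eq: "(\<lambda>E. Astep u (Suc n) E $ i $ k) = (\<lambda>E. if i = 1 then (if k = 1 then u (Suc n) - of_real E else -1)
            else (if k = 1 then 1 else 0))"
        by (simp add: Astep_def mat2_def)
      show ?thesis unfolding eq by (cases "i = 1"; cases "k = 1") (auto intro!: continuous_intros)
    qed
    have "(\<lambda>E. Ttrans u (Suc n) E $ i $ j) = (\<lambda>E. Astep u (Suc n) E $ i $ 1 * Ttrans u n E $ 1 $ j
                                                + Astep u (Suc n) E $ i $ 2 * Ttrans u n E $ 2 $ j)"
      by (simp add: matrix_matrix_mult_def sum_2)
    then show ?case by (simp only:) (intro continuous_on_add continuous_on_mult A Suc.IH)
  qed (simp add: continuous_on_const)
  have eq: "(\<lambda>E. Ttrans u n E) = (\<lambda>E. \<chi> i. \<chi> j. Ttrans u n E $ i $ j)"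
    by (simp add: vec_lambda_eta)
  show ?thesis by (subst eq) (intro continuous_on_vec_lambda entries)
qed

lemma continuous_on_inverse_opnorm_sq_Ttrans:
  "continuous_on UNIV (\<lambda>E. 1 / (opnorm (Ttrans u n E))\<^sup>2)"
proof -
  have "opnorm (Ttrans u n E) \<noteq> 0" for E
    using opnorm_pos_if_det_eq_1[OF det_Ttrans, of u n E] by simp
  moreover have "continuous_on UNIV (\<lambda>E. opnorm (Ttrans u n E))"
    by (rule continuous_on_compose2[OF lipschitz_on_continuous_on[OF opnorm_lipschitz] continuous_on_Ttrans])
       simp
  ultimately show ?thesis by (intro continuous_on_divide continuous_on_const continuous_on_power) auto
qed

locale open_chain =
  fixes v :: "nat \<Rightarrow> real" and N :: nat and zl zr :: real
  assumes two_le_N: "2 \<le> N" and zl_pos: "0 < zl" and zr_pos: "0 < zr"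
begin

abbreviation u :: "nat \<Rightarrow> complex" where
  "u \<equiv> vtilde v N zl zr"

lemma vtilde_Suc: "i < N \<Longrightarrow> u (Suc i) = of_real (v (Suc i)) - \<i> * of_real (damping N zl zr i)"
  using two_le_N by (auto simp: vtilde_def damping_def)

lemma dirichlet_sol_Suc_N_nonzero: "0 \<le> Im z \<Longrightarrow> dirichlet_sol u z (Suc N) \<noteq> 0"
  using zl_pos zr_pos two_le_N by (intro dirichlet_sol_nonzero) (auto simp: vtilde_def)

lemma continuous_on_dirichlet_ratio: "continuous_on {z. 0 \<le> Im z} (dirichlet_ratio u N j)"
proof -
  have "continuous_on {z. 0 \<le> Im z} (\<lambda>z. dirichlet_sol u z n)" for n
    using holomorphic_on_imp_continuous_on[OF dirichlet_sol_holomorphic] continuous_on_subset by blast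
  then show ?thesis
    unfolding dirichlet_ratio_def[abs_def]
    by (intro continuous_on_divide) (auto simp: dirichlet_sol_Suc_N_nonzero)
qed

lemma dirichlet_ratio_field_differentiable:
  "0 \<le> Im z \<Longrightarrow> dirichlet_ratio u N j field_differentiable at z"
  unfolding dirichlet_ratio_def[abs_def]
  by (intro field_differentiable_divide holomorphic_on_imp_differentiable_at[OF dirichlet_sol_holomorphic])
     (auto simp: dirichlet_sol_Suc_N_nonzero)

text \<open>psi E is the column (h - i Gamma - E)^(-1) e_N (see sum_hentry_psi), indexed from 0.\<close>

definition psi :: "nat \<Rightarrow> real \<Rightarrow> complex" where
  "psi i E = dirichlet_ratio u N (Suc i) (of_real E)"

lemma psi_0: "psi 0 E = 1 / dirichlet_sol u (of_real E) (Suc N)"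
  by (simp add: psi_def dirichlet_ratio_def)

lemma psi_eq: "psi i = (\<lambda>E. dirichlet_ratio u N (Suc i) (of_real E))"
  by (simp add: psi_def fun_eq_iff)

lemma continuous_on_psi: "continuous_on UNIV (psi i)"
  unfolding psi_eq
  by (rule continuous_on_compose2[OF continuous_on_dirichlet_ratio]) (auto intro: continuous_intros)

lemma continuous_on_cnj_psi: "continuous_on UNIV (\<lambda>E. cnj (psi i E))"
  using continuous_on_psi by (intro continuous_intros)

lemma tendsto_integral_psi:
  assumes "i < N"
  shows "((\<lambda>L. integral {-L..L} (psi i)) \<longlongrightarrow> (if Suc i = N then \<i> * pi else 0)) at_top"
proof -
  have "((\<lambda>L. integral {-L..L} (\<lambda>x. dirichlet_ratio u N (Suc i) (of_real x)))
      \<longlongrightarrow> - (\<i> * pi * (if Suc i = N then -1 else 0))) at_top"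
    by (rule tendsto_integral_symmetric_segment[OF continuous_on_dirichlet_ratio
          dirichlet_ratio_field_differentiable dirichlet_ratio_asymptotic[OF assms]])
  moreover have "- (\<i> * pi * (if Suc i = N then -1 else 0)) = (if Suc i = N then \<i> * pi else (0::complex))"
    by simp
  ultimately show ?thesis unfolding psi_eq by (simp only:)
qed

lemma integrable_psi_mult_cnj:
  assumes "i < N" "j < N"
  shows "integrable lborel (\<lambda>E. psi i E * cnj (psi j E))"
proof -
  obtain B1 R1 where 1: "0 \<le> B1" "\<And>x. R1 \<le> \<bar>x\<bar> \<Longrightarrow> cmod (psi i x) \<le> B1 / \<bar>x\<bar>"
    using norm_le_inverse_abs_eventually[OF dirichlet_ratio_asymptotic[OF assms(1)]]
    unfolding psi_def by blast
  obtain B2 R2 where 2: "0 \<le> B2" "\<And>x. R2 \<le> \<bar>x\<bar> \<Longrightarrow> cmod (psi j x) \<le> B2 / \<bar>x\<bar>"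
    using norm_le_inverse_abs_eventually[OF dirichlet_ratio_asymptotic[OF assms(2)]]
    unfolding psi_def by blast
  have cnj_decay: "cmod (cnj (psi j x)) \<le> B2 / \<bar>x\<bar>" if "R2 \<le> \<bar>x\<bar>" for x
    using 2(2)[OF that] by simp
  show ?thesis
    by (rule integrable_mult_of_inverse_decay[OF continuous_on_psi continuous_on_cnj_psi 1 2(1) cnj_decay])

qed

lemma sum_hentry_psi:
  assumes i: "i < N"
  shows "(\<Sum>k<N. of_real (hentry v i k) * psi k E)
       = (of_real E + \<i> * of_real (damping N zl zr i)) * psi i E + (if i + 1 = N then 1 else 0)"
proof -
  define z where "z = complex_of_real E"
  define D where "D = dirichlet_sol u z (Suc N)"
  have "D \<noteq> 0" unfolding D_def z_def by (rule dirichlet_sol_Suc_N_nonzero) simp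
  define P where "P k = dirichlet_sol u z (Suc k) / D" for k
  have psi: "psi k E = P k" for k by (simp add: psi_def dirichlet_ratio_def P_def D_def z_def)
  have Q: "dirichlet_sol u z i / D = (if 0 < i then P (i - 1) else 0)"
    by (cases i) (auto simp: P_def)
  have step: "dirichlet_sol u z (Suc (Suc i))
      = (of_real (v (Suc i)) - \<i> * of_real (damping N zl zr i) - z) * dirichlet_sol u z (Suc i)
        - dirichlet_sol u z i"
    by (simp add: vtilde_Suc[OF i])
  have rec: "P (Suc i) = (of_real (v (Suc i)) - \<i> * of_real (damping N zl zr i) - z) * P i
                              - (if 0 < i then P (i - 1) else 0)"
    by (unfold Q[symmetric], unfold P_def step, simp only: diff_divide_distrib times_divide_eq_right)
  have PN: "P N = 1" using \<open>D \<noteq> 0\<close> by (simp add: P_def D_def)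
  have "(\<Sum>k<N. of_real (hentry v i k) * psi k E) =
     of_real (v (i + 1)) * P i - (if 0 < i then P (i - 1) else 0) - (if i + 1 < N then P (i + 1) else 0)"
    unfolding psi by (rule sum_hentry_mult[OF i])
  also have "\<dots> = (z + \<i> * of_real (damping N zl zr i)) * P i + (if i + 1 = N then 1 else 0)"
  proof (cases "i + 1 < N")
    case True
    then show ?thesis using rec by (simp add: algebra_simps)
  next
    case False
    then have "Suc i = N" using i by simp
    then show ?thesis using rec PN by (simp add: algebra_simps)
  qed
  finally show ?thesis by (simp add: psi z_def)
qed

lemma lop_entries_psi_outer:
  assumes i: "i < N" and j: "j < N"
  shows "lop_entries N v zl zr (\<lambda>i j. psi i E * cnj (psi j E)) i j
       = \<i> * ((if j + 1 = N then 1 else 0) * psi i E - (if i + 1 = N then 1 else 0) * cnj (psi j E))"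
proof -
  have s1: "(\<Sum>k<N. of_real (hentry v i k) * (psi k E * cnj (psi j E)))
      = ((of_real E + \<i> * of_real (damping N zl zr i)) * psi i E + (if i + 1 = N then 1 else 0))
        * cnj (psi j E)"
    unfolding sum_hentry_psi[OF i, symmetric] by (simp add: sum_distrib_right mult.assoc)
  have s2: "(\<Sum>k<N. psi i E * cnj (psi k E) * of_real (hentry v k j))
      = psi i E * cnj ((of_real E + \<i> * of_real (damping N zl zr j)) * psi j E
                        + (if j + 1 = N then 1 else 0))"
    unfolding sum_hentry_psi[OF j, symmetric]
    by (simp add: sum_distrib_left cnj_sum hentry_sym[of v j] mult_ac)
  have alg: "- \<i> * (((of_real E + \<i> * of_real gi) * p + b) * cnj q
                     - p * cnj ((of_real E + \<i> * of_real gj) * q + a))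
             - of_real (gi + gj) * (p * cnj q) = \<i> * (cnj a * p - b * cnj q)"
    for p q a b :: complex and gi gj :: real
    by (simp add: complex_eq_iff algebra_simps)
  show ?thesis unfolding lop_entries_def s1 s2 alg by simp
qed

lemma integral_lop_entries_psi_outer:
  assumes i: "i < N" and j: "j < N"
  shows "(LINT E|lborel. lop_entries N v zl zr (\<lambda>i j. psi i E * cnj (psi j E)) i j)
       = complex_of_real (- 2 * pi * (if i = N - 1 \<and> j = N - 1 then 1 else 0))"
proof -
  define a where "a = (if j + 1 = N then 1 else 0 :: complex)"
  define b where "b = (if i + 1 = N then 1 else 0 :: complex)"
  have G: "(\<lambda>E. lop_entries N v zl zr (\<lambda>i j. psi i E * cnj (psi j E)) i j)
      = (\<lambda>E. \<i> * (a * psi i E - b * cnj (psi j E)))"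
    using lop_entries_psi_outer[OF i j] by (simp add: a_def b_def)
  have int: "integrable lborel (\<lambda>E. lop_entries N v zl zr (\<lambda>i j. psi i E * cnj (psi j E)) i j)"
    by (rule integrable_lop_entries[OF integrable_psi_mult_cnj i j])
  have segment: "integral {-L..L} (\<lambda>E. \<i> * (a * psi i E - b * cnj (psi j E)))
      = \<i> * (a * integral {-L..L} (psi i) - b * cnj (integral {-L..L} (psi j)))" for L
  proof -
    have "psi k integrable_on {-L..L}" "(\<lambda>E. cnj (psi k E)) integrable_on {-L..L}" for k
      by (rule integrable_continuous_interval continuous_on_subset[OF continuous_on_psi]
            continuous_on_subset[OF continuous_on_cnj_psi] subset_UNIV)+
    then have "integral {-L..L} (\<lambda>E. a * psi i E - b * cnj (psi j E))
        = a * integral {-L..L} (psi i) - integral {-L..L} (\<lambda>E. b * cnj (psi j E))"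
      by (simp add: integral_diff integrable_on_mult_right)
    then show ?thesis by (simp add: Henstock_Kurzweil_Integration.integral_cnj)
  qed
  have "((\<lambda>L. \<i> * (a * integral {-L..L} (psi i) - b * cnj (integral {-L..L} (psi j))))
      \<longlongrightarrow> \<i> * (a * (if Suc i = N then \<i> * pi else 0) - b * cnj (if Suc j = N then \<i> * pi else 0))) at_top"
    by (intro tendsto_intros tendsto_integral_psi i j)
  moreover have "\<i> * (a * (if Suc i = N then \<i> * pi else 0) - b * cnj (if Suc j = N then \<i> * pi else 0))
      = complex_of_real (- 2 * pi * (if i = N - 1 \<and> j = N - 1 then 1 else 0))"
  proof -
    have "(Suc i = N) = (i = N - 1)" "(Suc j = N) = (j = N - 1)" using i j by auto
    then show ?thesis unfolding a_def b_def Suc_eq_plus1[symmetric]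
      by (cases "i = N - 1"; cases "j = N - 1") (simp_all add: algebra_simps)
  qed
  ultimately show ?thesis
    using lebesgue_integral_eq_lim_symmetric_segment[OF int[unfolded G]] unfolding G segment by simp
qed

definition response :: "complex Matrix.mat" where
  "response = Matrix.mat N N (\<lambda>(i, j). of_real (- 1 / (2 * pi)) * (LINT E|lborel. psi i E * cnj (psi j E)))"

lemma response_carrier: "response \<in> carrier_mat N N"
  by (simp add: response_def)

lemma lop_response: "lop N v zl zr response = proj N N"
proof (rule eq_matI)
  fix i j assume "i < dim_row (proj N N)" "j < dim_col (proj N N)"
  then have ij: "i < N" "j < N" by (simp_all add: proj_def)
  let ?c = "complex_of_real (- 1 / (2 * pi))"
  have "lop N v zl zr response $$ (i, j) = lop_entries N v zl zr (\<lambda>i j. response $$ (i, j)) i j"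
    by (rule index_lop[OF response_carrier ij])
  also have "\<dots> = lop_entries N v zl zr (\<lambda>i j. ?c * (LINT E|lborel. psi i E * cnj (psi j E))) i j"
    by (rule lop_entries_cong[OF _ ij]) (simp add: response_def)
  also have "\<dots> = ?c * lop_entries N v zl zr (\<lambda>i j. LINT E|lborel. psi i E * cnj (psi j E)) i j"
    by (rule lop_entries_scale)
  also have "\<dots> = ?c * (LINT E|lborel. lop_entries N v zl zr (\<lambda>i j. psi i E * cnj (psi j E)) i j)"
    by (simp only: integral_lop_entries[OF integrable_psi_mult_cnj ij])
  also have "\<dots> = ?c * complex_of_real (- 2 * pi * (if i = N - 1 \<and> j = N - 1 then 1 else 0))"
    by (simp only: integral_lop_entries_psi_outer[OF ij])
  also have "\<dots> = (if i = N - 1 \<and> j = N - 1 then 1 else 0)" by simp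
  finally show "lop N v zl zr response $$ (i, j) = proj N N $$ (i, j)"
    using ij by (simp add: proj_def)
qed (simp_all add: carrier_matD[OF lop_carrier[OF response_carrier]] proj_def)

lemma neg_lop_inv_corner:
  "- (lop_inv N v zl zr (proj N N) $$ (0, 0)) = of_real ((LINT E|lborel. (cmod (psi 0 E))\<^sup>2) / (2 * pi))"
proof -
  have "lop_inv N v zl zr (proj N N) = response"
    using zl_pos zr_pos by (intro lop_inv_eqI response_carrier lop_response) auto
  moreover have "response $$ (0, 0)
      = complex_of_real (- 1 / (2 * pi)) * (LINT E|lborel. psi 0 E * cnj (psi 0 E))"
    using two_le_N by (simp add: response_def)
  moreover have "(\<lambda>E. psi 0 E * cnj (psi 0 E)) = (\<lambda>E. of_real ((cmod (psi 0 E))\<^sup>2))"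
    by (rule ext) (rule complex_norm_square[symmetric])
  ultimately have "- (lop_inv N v zl zr (proj N N) $$ (0, 0))
      = - (complex_of_real (- 1 / (2 * pi)) * complex_of_real (LINT E|lborel. (cmod (psi 0 E))\<^sup>2))"
    by (simp only: integral_complex_of_real)
  also have "\<dots> = complex_of_real (- (- 1 / (2 * pi) * (LINT E|lborel. (cmod (psi 0 E))\<^sup>2)))"
    by (simp only: of_real_mult of_real_minus)
  finally show ?thesis by simp
qed

lemma integrable_cmod_psi_0_sq: "integrable lborel (\<lambda>E. (cmod (psi 0 E))\<^sup>2)"
  using integrable_norm[OF integrable_psi_mult_cnj[of 0 0]] two_le_N
  by (simp add: complex_mod_mult_cnj power2_eq_square norm_mult)

lemma cmod_psi_0_sq_comparable:
  fixes E :: real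
  defines "T \<equiv> Ttrans (\<lambda>k. of_real (v k)) N E"
  shows "1 / (opnorm T)\<^sup>2 \<le> 4 * ((1 + zl\<^sup>2) * (1 + zr\<^sup>2)) * (cmod (psi 0 E))\<^sup>2"
    and "(cmod (psi 0 E))\<^sup>2 \<le> 4 / (min 1 (zl\<^sup>2) * min 1 (zr\<^sup>2)) * (1 / (opnorm T)\<^sup>2)"
proof -
  define D where "D = dirichlet_sol u (of_real E) (Suc N)"
  have lower: "min 1 (zl\<^sup>2) * min 1 (zr\<^sup>2) / 4 * (opnorm T)\<^sup>2 \<le> (cmod D)\<^sup>2"
    and upper: "(cmod D)\<^sup>2 \<le> 4 * ((1 + zl\<^sup>2) * (1 + zr\<^sup>2)) * (opnorm T)\<^sup>2"
    unfolding T_def D_def using two_le_N zl_pos zr_pos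
    by (intro cmod_sq_dirichlet_sol_vtilde_bounds; simp)+
  have "0 < opnorm T" unfolding T_def by (intro opnorm_pos_if_det_eq_1 det_Ttrans)
  moreover have "0 < min 1 (zl\<^sup>2) * min 1 (zr\<^sup>2)" using zl_pos zr_pos by simp
  ultimately have "0 < min 1 (zl\<^sup>2) * min 1 (zr\<^sup>2) / 4 * (opnorm T)\<^sup>2" by simp
  then have "0 < (cmod D)\<^sup>2" using lower by linarith
  then have pos: "0 < (opnorm T)\<^sup>2" "0 < (cmod D)\<^sup>2" "0 < min 1 (zl\<^sup>2) * min 1 (zr\<^sup>2)"
    using \<open>0 < opnorm T\<close> \<open>0 < min 1 (zl\<^sup>2) * min 1 (zr\<^sup>2)\<close> by simp_all
  have psi: "(cmod (psi 0 E))\<^sup>2 = 1 / (cmod D)\<^sup>2"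
    by (simp add: psi_0 D_def norm_divide power_one_over)
  show "1 / (opnorm T)\<^sup>2 \<le> 4 * ((1 + zl\<^sup>2) * (1 + zr\<^sup>2)) * (cmod (psi 0 E))\<^sup>2"
    using upper pos unfolding psi by (simp add: divide_simps mult.commute)
  show "(cmod (psi 0 E))\<^sup>2 \<le> 4 / (min 1 (zl\<^sup>2) * min 1 (zr\<^sup>2)) * (1 / (opnorm T)\<^sup>2)"
    using lower pos unfolding psi by (simp add: divide_simps mult.commute)
qed

lemma neg_lop_inv_corner_bounds:
  defines "I \<equiv> LINT E|lborel. 1 / (opnorm (Ttrans (\<lambda>n. of_real (v n)) N E))\<^sup>2"
    and "q \<equiv> - (lop_inv N v zl zr (proj N N) $$ (0, 0))"
  shows "Im q = 0"
    and "1 / (8 * pi * ((1 + zl\<^sup>2) * (1 + zr\<^sup>2))) * I \<le> Re q"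
    and "Re q \<le> 2 / (pi * (min 1 (zl\<^sup>2) * min 1 (zr\<^sup>2))) * I"
proof -
  define f where "f E = (cmod (psi 0 E))\<^sup>2" for E
  define g where "g E = 1 / (opnorm (Ttrans (\<lambda>n. of_real (v n)) N E))\<^sup>2" for E
  define K where "K = (1 + zl\<^sup>2) * (1 + zr\<^sup>2)"
  define k where "k = min 1 (zl\<^sup>2) * min 1 (zr\<^sup>2)"
  have "0 < K" "0 < k" using zl_pos zr_pos by (simp_all add: K_def k_def add_pos_nonneg)
  have gf: "g E \<le> 4 * K * f E" and fg: "f E \<le> 4 / k * g E" for E
    unfolding f_def g_def K_def k_def by (rule cmod_psi_0_sq_comparable)+
  have int_f: "integrable lborel f" unfolding f_def by (rule integrable_cmod_psi_0_sq)
  have "continuous_on UNIV g"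
    unfolding g_def by (rule continuous_on_inverse_opnorm_sq_Ttrans)
  then have int_g: "integrable lborel g"
  proof (intro Bochner_Integration.integrable_bound[OF integrable_mult_right[OF int_f]])
    show "AE E in lborel. norm (g E) \<le> norm (4 * K * f E)"
      using gf \<open>0 < K\<close> by (intro AE_I2) (simp add: g_def f_def)
  qed (simp add: borel_measurable_continuous_onI)
  have "integral\<^sup>L lborel g \<le> integral\<^sup>L lborel (\<lambda>E. 4 * K * f E)"
    by (rule integral_mono[OF int_g _ gf]) (simp add: int_f)
  then have gf_int: "1 / (8 * pi * K) * integral\<^sup>L lborel g \<le> integral\<^sup>L lborel f / (2 * pi)"
    using \<open>0 < K\<close> by (simp add: field_simps)
  have "integral\<^sup>L lborel f \<le> integral\<^sup>L lborel (\<lambda>E. 4 / k * g E)"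
    by (rule integral_mono[OF int_f _ fg]) (simp add: int_g)
  then have fg_int: "integral\<^sup>L lborel f / (2 * pi) \<le> 2 / (pi * k) * integral\<^sup>L lborel g"
    using \<open>0 < k\<close> by (simp add: field_simps)
  have "I = integral\<^sup>L lborel g" by (simp add: I_def g_def[abs_def])
  moreover have "Re q = integral\<^sup>L lborel f / (2 * pi)" "Im q = 0"
    by (simp_all add: q_def neg_lop_inv_corner f_def[abs_def])
  ultimately show "Im q = 0" "1 / (8 * pi * K) * I \<le> Re q" "Re q \<le> 2 / (pi * k) * I"
    using gf_int fg_int by simp_all
qed

end

theorem mainTheorem7:
  fixes zl zr :: real
  assumes "zl \<ge> 0" and "zr \<ge> 0"
  shows "(\<exists>a b. a > 0 \<and> b > 0 \<and>
            (\<forall>(v :: nat \<Rightarrow> real) N (E :: real). bounded (range v) \<and> N \<ge> 2 \<longrightarrow>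
               a * opnorm (Ttrans (\<lambda>n. of_real (v n)) N E) \<le> opnorm (Ttrans (vtilde v N zl zr) N E) \<and>
               opnorm (Ttrans (vtilde v N zl zr) N E) \<le> b * opnorm (Ttrans (\<lambda>n. of_real (v n)) N E)))
       \<and> (zl > 0 \<and> zr > 0 \<longrightarrow>
            (\<forall>v :: nat \<Rightarrow> real. bounded (range v) \<longrightarrow>
              (\<exists>c1 c2. c1 > 0 \<and> c2 > 0 \<and>
                 (\<forall>N \<ge> 2.
                    let I = (LINT E|lborel. 1 / (opnorm (Ttrans (\<lambda>n. of_real (v n)) N E))\<^sup>2);
                        q = - (lop_inv N v zl zr (proj N N) $$ (0, 0))
                    in Im q = 0 \<and> c1 * I \<le> Re q \<and> Re q \<le> c2 * I))))"
proof -
  have "open_chain N zl zr" if "2 \<le> N" "0 < zl" "0 < zr" for N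
    using that by unfold_locales
  note bounds = open_chain.neg_lop_inv_corner_bounds[OF this]
  have a_pos: "0 < 1 / ((2 + zr) * (2 + zl))" and b_pos: "0 < (2 + zr) * (2 + zl)"
    using assms by (simp_all add: add_pos_nonneg)
  have c1_pos: "0 < 1 / (8 * pi * ((1 + zl\<^sup>2) * (1 + zr\<^sup>2)))"
    by (simp add: add_pos_nonneg)
  have c2_pos: "0 < 2 / (pi * (min 1 (zl\<^sup>2) * min 1 (zr\<^sup>2)))" if "0 < zl" "0 < zr"
    using that by simp
  show ?thesis
    apply (intro conjI impI allI)
    subgoal
      by (intro exI[of _ "1 / ((2 + zr) * (2 + zl))"] exI[of _ "(2 + zr) * (2 + zl)"] conjI allI impI
            a_pos b_pos opnorm_Ttrans_vtilde_comparable[OF assms]) auto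
    subgoal
      unfolding Let_def
      by (intro exI[of _ "1 / (8 * pi * ((1 + zl\<^sup>2) * (1 + zr\<^sup>2)))"]
            exI[of _ "2 / (pi * (min 1 (zl\<^sup>2) * min 1 (zr\<^sup>2)))"] conjI allI impI c1_pos c2_pos bounds)
         auto
    done
qed

end
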